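(* Let $q\ge 2$ and let $F_q(x,y)=1-e^x-e^y+\big(1-x-y-(q-2)xy+xe^{(q-2)y}+ye^{(q-2)x}\big)e^{x+y}$. Then, as formal power series in $x$, $$\sum_{n=0}^{\infty}B_n(q)\frac{x^n}{n!}=\frac{\big(1+(q-2)x\big)e^{2x}}{1-F_q(x,x)}.$$
   Context: A $q$-ary matrix has entries in $\{0,1,\ldots,q-1\}$; a $q$-ary $m\times n$ matrix is a strong lonesum matrix if no other $q$-ary $m\times n$ matrix has the same row sums and column sums. $B_n(q)$ denotes the number of symmetric ($M=M^T$) $q$-ary strong lonesum $n\times n$ matrices, with $B_0(q)=1$. *)

theory Defs
  imports "HOL-Computational_Algebra.Formal_Power_Series"
begin

text \<open>An m x n matrix is represented as a function nat => nat => nat which is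
  zero outside the index range {0..<m} x {0..<n}.  It is q-ary if its entries
  lie in {0,...,q-1}.\<close>
definition qary_matrix :: "nat \<Rightarrow> nat \<Rightarrow> nat \<Rightarrow> (nat \<Rightarrow> nat \<Rightarrow> nat) \<Rightarrow> bool" where
  "qary_matrix q m n M \<longleftrightarrow>
     (\<forall>i j. (i < m \<and> j < n \<longrightarrow> M i j < q) \<and> (\<not> (i < m \<and> j < n) \<longrightarrow> M i j = 0))"

definition row_sum :: "nat \<Rightarrow> (nat \<Rightarrow> nat \<Rightarrow> nat) \<Rightarrow> nat \<Rightarrow> nat" where
  "row_sum n M i = (\<Sum>j<n. M i j)"

definition col_sum :: "nat \<Rightarrow> (nat \<Rightarrow> nat \<Rightarrow> nat) \<Rightarrow> nat \<Rightarrow> nat" where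
  "col_sum m M j = (\<Sum>i<m. M i j)"

definition strong_lonesum :: "nat \<Rightarrow> nat \<Rightarrow> nat \<Rightarrow> (nat \<Rightarrow> nat \<Rightarrow> nat) \<Rightarrow> bool" where
  "strong_lonesum q m n M \<longleftrightarrow> qary_matrix q m n M \<and>
     (\<forall>M'. qary_matrix q m n M' \<and> (\<forall>i<m. row_sum n M' i = row_sum n M i)
           \<and> (\<forall>j<n. col_sum m M' j = col_sum m M j) \<longrightarrow> M' = M)"

definition B :: "nat \<Rightarrow> nat \<Rightarrow> nat" where
  "B n q = card {M. strong_lonesum q n n M \<and> (\<forall>i j. M i j = M j i)}"

text \<open>F_q(x,y) for formal power series x, y (with zero constant term), e^{c z}
  being the composition of the series fps_exp c with z.\<close>
definition Fq :: "nat \<Rightarrow> real fps \<Rightarrow> real fps \<Rightarrow> real fps" where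
  "Fq q x y = 1 - (fps_exp 1 oo x) - (fps_exp 1 oo y)
     + (1 - x - y - (of_nat q - 2) * x * y + x * (fps_exp (of_nat q - 2) oo y)
        + y * (fps_exp (of_nat q - 2) oo x)) * (fps_exp 1 oo (x + y))"

end

theory Submission
  imports Defs "HOL-Library.FuncSet"
begin

(* Proof outline.
   (1) A q-ary n x n matrix is strong lonesum iff it contains no "switch": rows i ~= i', columns
       j ~= j' with M i j > 0, M i' j' > 0, M i j' < q-1, M i' j < q-1 (adding -1,+1,+1,-1 at
       these four places preserves all margins).  Necessity is the switch itself; for
       sufficiency the difference of two matrices with equal margins yields a closed alternating
       walk, which can be shortened until it exhibits a switch.
   (2) Symmetric switch-free matrices supported on a finite index set I (the set SLS q I) split
       into those with a zero row (deleting the zero rows leaves one without zero rows), those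
       with a full row (the complement q-1-M exchanges the two classes), and the primitive ones.
       A primitive matrix has a unique "low" row (all entries < q-1) or a unique "positive" row
       (all entries > 0); in the first case it is assembled from that row and a symmetric
       switch-free block on the indices that are neither low nor positive.
   (3) The resulting counting recurrences show, by induction on |I|, that the counts depend only
       on |I|.  For the exponential generating functions G (all), N (no zero row), P (primitive)
       they read G = e^x N,  G = P + 2 (e^x - 1) N,
       P = 1 + (q-2)x + x (2 (e^{(q-2)x} - 1) G - (q-2) x G),
       and eliminating N and P gives G (1 - F_q(x,x)) = (1 + (q-2)x) e^{2x}. *)

unbundle fps_syntax

type_synonym mat = "nat \<Rightarrow> nat \<Rightarrow> nat"

subsection \<open>Strong lonesum matrices are exactly the switch-free ones\<close>

definition switch_free :: "nat \<Rightarrow> nat set \<Rightarrow> mat \<Rightarrow> bool" where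
  "switch_free q I M \<longleftrightarrow> (\<forall>i\<in>I. \<forall>i'\<in>I. \<forall>j\<in>I. \<forall>j'\<in>I. i \<noteq> i' \<longrightarrow> j \<noteq> j' \<longrightarrow>
      0 < M i j \<longrightarrow> 0 < M i' j' \<longrightarrow> M i j' < q - 1 \<longrightarrow> \<not> M i' j < q - 1)"

lemma switch_free_E:
  assumes "switch_free q I M" "i \<in> I" "i' \<in> I" "j \<in> I" "j' \<in> I" "i \<noteq> i'" "j \<noteq> j'"
    "0 < M i j" "0 < M i' j'" "M i j' < q - 1" "M i' j < q - 1"
  shows False
  using assms unfolding switch_free_def by blast

lemma switch_free_mono: "switch_free q I M \<Longrightarrow> J \<subseteq> I \<Longrightarrow> switch_free q J M"
  unfolding switch_free_def by blast

lemma switch_free_cong: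
  "switch_free q W M \<Longrightarrow> (\<And>a b. a \<in> W \<Longrightarrow> b \<in> W \<Longrightarrow> N a b = M a b) \<Longrightarrow> switch_free q W N"
  unfolding switch_free_def by simp

definition alt_cycle :: "nat \<Rightarrow> nat set \<Rightarrow> mat \<Rightarrow> (nat \<Rightarrow> nat) \<Rightarrow> (nat \<Rightarrow> nat) \<Rightarrow> nat \<Rightarrow> nat \<Rightarrow> bool" where
  "alt_cycle q I M r c a b \<longleftrightarrow> a < b \<and> r b = r a \<and>
     (\<forall>t. a \<le> t \<and> t < b \<longrightarrow> r t \<in> I \<and> c t \<in> I \<and> 0 < M (r t) (c t) \<and>
        M (r (Suc t)) (c t) < q - 1 \<and> r t \<noteq> r (Suc t)) \<and>
     (\<forall>t. a \<le> t \<and> Suc t < b \<longrightarrow> c t \<noteq> c (Suc t)) \<and> c (b - 1) \<noteq> c a"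

text \<open>If the first two steps of an alternating cycle do not form a switch, i.e. the entry
  M (r a) (c (a+1)) is full, then row r (a+1) can be skipped: start the cycle one step later
  from row r a.\<close>
lemma alt_cycle_shortcut:
  assumes cyc: "alt_cycle q I M r c a b" and q: "q \<ge> 2" and long: "Suc (Suc a) < b"
    and full: "M (r a) (c (Suc a)) \<ge> q - 1"
  shows "alt_cycle q I M (r(Suc a := r a)) c (Suc a) b"
proof -
  let ?r = "r(Suc a := r a)"
  have step: "r t \<in> I \<and> c t \<in> I \<and> 0 < M (r t) (c t) \<and> M (r (Suc t)) (c t) < q - 1 \<and> r t \<noteq> r (Suc t)"
    if "a \<le> t" "t < b" for t
    using cyc that unfolding alt_cycle_def by blast
  have closed: "r b = r a" and last: "c (b - 1) \<noteq> c a" using cyc by (auto simp: alt_cycle_def)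
  have "?r t \<in> I \<and> c t \<in> I \<and> 0 < M (?r t) (c t) \<and> M (?r (Suc t)) (c t) < q - 1 \<and> ?r t \<noteq> ?r (Suc t)"
    if t: "Suc a \<le> t" "t < b" for t
  proof (cases "t = Suc a")
    case True
    have "r (Suc (Suc a)) \<noteq> r a" using step[of "Suc a"] full long by auto
    then show ?thesis using True step[of a] step[of "Suc a"] full q long by auto
  next
    case False
    then show ?thesis using t step[of t] by auto
  qed
  moreover have "c (b - 1) \<noteq> c (Suc a)"
  proof
    assume "c (b - 1) = c (Suc a)"
    moreover have "M (r b) (c (b - 1)) < q - 1" using step[of "b - 1"] long by auto
    ultimately show False using closed full by auto
  qed
  ultimately show ?thesis using cyc long closed unfolding alt_cycle_def by auto
qed

text \<open>A switch-free matrix has no alternating cycle: by induction on its length, either the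
  first two steps form a switch or the cycle can be shortened.\<close>
lemma no_alternating_cycle:
  assumes sf: "switch_free q I M" and q: "q \<ge> 2"
  shows "\<not> alt_cycle q I M r c a b"
proof (induction "b - a" arbitrary: a r rule: less_induct)
  case less
  show ?case
  proof
    assume cyc: "alt_cycle q I M r c a b"
    then have ab: "a < b" and closed: "r b = r a" and last: "c (b - 1) \<noteq> c a"
      and step: "\<And>t. a \<le> t \<Longrightarrow> t < b \<Longrightarrow> r t \<in> I \<and> c t \<in> I \<and> 0 < M (r t) (c t) \<and>
        M (r (Suc t)) (c t) < q - 1 \<and> r t \<noteq> r (Suc t)"
      and turn: "\<And>t. a \<le> t \<Longrightarrow> Suc t < b \<Longrightarrow> c t \<noteq> c (Suc t)"
      unfolding alt_cycle_def by blast+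
    consider "b = Suc a" | "b = Suc (Suc a)" | "Suc (Suc a) < b" "M (r a) (c (Suc a)) < q - 1"
      | "Suc (Suc a) < b" "M (r a) (c (Suc a)) \<ge> q - 1"
      using ab by linarith
    then show False
    proof cases
      case 1
      then show False using step[of a] closed by auto
    next
      case 2
      show False
        using switch_free_E[OF sf, of "r a" "r (Suc a)" "c a" "c (Suc a)"] step[of a] step[of "Suc a"]
          turn[of a] closed 2 by auto
    next
      case 3
      show False
        using switch_free_E[OF sf, of "r a" "r (Suc a)" "c a" "c (Suc a)"] step[of a] step[of "Suc a"]
          turn[of a] 3 by auto
    next
      case 4
      then show False using less.hyps[of "Suc a"] alt_cycle_shortcut[OF cyc q] by auto
    qed
  qed
qed

lemma sum_zero_has_neg:
  fixes f :: "'a \<Rightarrow> 'b::{ordered_comm_monoid_add, linorder}"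
  assumes A: "finite A" and sum: "sum f A = 0" and x: "x \<in> A" "f x \<noteq> 0"
  shows "\<exists>y\<in>A. f y < 0"
proof (rule ccontr)
  assume "\<not> ?thesis"
  then have "\<forall>y\<in>A. 0 \<le> f y" by (auto simp: not_less)
  then have "\<forall>y\<in>A. f y = 0" using sum_nonneg_eq_0_iff[OF A] sum by blast
  with x show False by auto
qed

text \<open>An integer matrix with zero row and column sums and a negative entry contains an
  infinite walk alternating between negative entries (r t, c t) and positive entries
  (r (t+1), c t); since there are only n rows, some row repeats.\<close>
lemma alternating_walk:
  fixes D :: "nat \<Rightarrow> nat \<Rightarrow> int"
  assumes rows: "\<And>a. a < n \<Longrightarrow> (\<Sum>b<n. D a b) = 0"
    and cols: "\<And>b. b < n \<Longrightarrow> (\<Sum>a<n. D a b) = 0"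
    and start: "r0 < n" "b0 < n" "D r0 b0 < 0"
  obtains r c a b where "\<And>t. r t < n \<and> c t < n \<and> D (r t) (c t) < 0 \<and> 0 < D (r (Suc t)) (c t)"
    and "a < b" "r a = r b"
proof -
  have neg_in_row: "\<exists>b<n. D a b < 0" if "a < n" "b' < n" "D a b' > 0" for a b'
    using sum_zero_has_neg[of "{..<n}" "D a" b'] rows[OF that(1)] that by auto
  have pos_in_col: "\<exists>a<n. D a b > 0" if "b < n" "a' < n" "D a' b < 0" for b a'
    using sum_zero_has_neg[of "{..<n}" "\<lambda>a. - D a b" a'] cols[OF that(1)] that by (auto simp: sum_negf)
  define P where "P a \<longleftrightarrow> a < n \<and> (\<exists>b<n. D a b < 0)" for a
  define col where "col a = (SOME b. b < n \<and> D a b < 0)" for a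
  define nxt where "nxt a = (SOME a'. a' < n \<and> D a' (col a) > 0)" for a
  have col: "col a < n \<and> D a (col a) < 0" if "P a" for a
    using that unfolding P_def col_def by (metis (mono_tags, lifting) someI_ex)
  have nxt: "nxt a < n \<and> D (nxt a) (col a) > 0" if "P a" for a
  proof -
    have "\<exists>a'. a' < n \<and> D a' (col a) > 0"
      using pos_in_col[of "col a" a] col[OF that] that unfolding P_def by auto
    then show ?thesis unfolding nxt_def by (metis (mono_tags, lifting) someI_ex)
  qed
  have P_nxt: "P (nxt a)" if "P a" for a
    using nxt[OF that] col[OF that] neg_in_row[of "nxt a" "col a"] unfolding P_def by auto
  define r where "r t = (nxt ^^ t) r0" for t
  have Pr: "P (r t)" for t
  proof (induction t)
    case 0 show ?case using start by (auto simp: r_def P_def)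
  next
    case (Suc t) thus ?case using P_nxt by (simp add: r_def)
  qed
  have walk: "r t < n \<and> col (r t) < n \<and> D (r t) (col (r t)) < 0 \<and> 0 < D (r (Suc t)) (col (r t))" for t
    using Pr[of t] col[OF Pr] nxt[OF Pr] by (simp add: r_def P_def)
  have "\<not> inj_on r {..n}"
  proof
    assume "inj_on r {..n}"
    hence "card (r ` {..n}) = Suc n" by (simp add: card_image)
    moreover have "r ` {..n} \<subseteq> {..<n}" using walk by auto
    ultimately show False using card_mono[of "{..<n}" "r ` {..n}"] by auto
  qed
  then obtain a b where "a \<noteq> b" "r a = r b" unfolding inj_on_def by auto
  then obtain a b where "a < b" "r a = r b" by (metis linorder_neqE_nat)
  with walk show thesis by (intro that[of r "\<lambda>t. col (r t)" a b]) auto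
qed

lemma qary_entry_le: "qary_matrix q m n M \<Longrightarrow> M i j \<le> q - 1"
  unfolding qary_matrix_def by (cases "i < m \<and> j < n") force+

lemma switch_free_imp_unique:
  assumes q: "q \<ge> 2" and sf: "switch_free q {..<n} M"
    and qM: "qary_matrix q n n M" and qM': "qary_matrix q n n M'"
    and rs: "\<forall>i<n. row_sum n M' i = row_sum n M i" and cs: "\<forall>j<n. col_sum n M' j = col_sum n M j"
  shows "M' = M"
proof (rule ccontr)
  assume "M' \<noteq> M"
  define D where "D a b = int (M' a b) - int (M a b)" for a b
  have rows: "(\<Sum>b<n. D a b) = 0" if "a < n" for a
    using rs that by (simp add: D_def sum_subtractf row_sum_def flip: of_nat_sum)
  have cols: "(\<Sum>a<n. D a b) = 0" if "b < n" for b
    using cs that by (simp add: D_def sum_subtractf col_sum_def flip: of_nat_sum)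
  obtain a0 b0 where ne: "D a0 b0 \<noteq> 0" using \<open>M' \<noteq> M\<close> by (auto simp: D_def fun_eq_iff)
  have "a0 < n \<and> b0 < n"
    using ne qM qM' unfolding qary_matrix_def D_def by (cases "a0 < n \<and> b0 < n") auto
  hence ab0: "a0 < n" "b0 < n" by auto
  obtain b1 where b1: "b1 < n" "D a0 b1 < 0"
    using sum_zero_has_neg[of "{..<n}" "D a0" b0] rows[OF ab0(1)] ne ab0 by auto
  obtain r c a b where walk: "\<And>t. r t < n \<and> c t < n \<and> D (r t) (c t) < 0 \<and> 0 < D (r (Suc t)) (c t)"
    and ab: "a < b" "r a = r b"
    using alternating_walk[OF rows cols ab0(1) b1] by blast
  have neg: "M' (r t) (c t) < M (r t) (c t)" and pos: "M (r (Suc t)) (c t) < M' (r (Suc t)) (c t)" for t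
    using walk[of t] by (auto simp: D_def)
  have "0 < M (r t) (c t)" "M (r (Suc t)) (c t) < q - 1" for t
    using neg[of t] pos[of t] qary_entry_le[OF qM'] by (auto intro: order_less_le_trans)
  moreover have "c t \<noteq> c (Suc t)" "r t \<noteq> r (Suc t)" for t
    using walk[of t] walk[of "Suc t"] by auto
  moreover have "Suc (b - 1) = b" using ab by simp
  then have "c (b - 1) \<noteq> c a" using walk[of "b - 1"] walk[of a] ab(2) by auto
  ultimately have "alt_cycle q {..<n} M r c a b"
    using walk ab unfolding alt_cycle_def by auto
  with no_alternating_cycle[OF sf q] show False by blast
qed

definition switch_delta :: "nat \<Rightarrow> nat \<Rightarrow> nat \<Rightarrow> nat \<Rightarrow> nat \<Rightarrow> nat \<Rightarrow> int" where
  "switch_delta i i' j j' a b = of_bool (a = i \<and> b = j') + of_bool (a = i' \<and> b = j)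
     - of_bool (a = i \<and> b = j) - of_bool (a = i' \<and> b = j')"

lemma switch_delta_sums:
  assumes "i < n" "i' < n" "j < n" "j' < n"
  shows "(\<Sum>b<n. switch_delta i i' j j' a b) = 0" and "(\<Sum>a<n. switch_delta i i' j j' a b) = 0"
proof -
  have delta: "(\<Sum>b<n. (of_bool (b = x) :: int)) = 1" if "x < n" for x
    using that by (simp add: of_bool_def sum.delta)
  have by_row: "switch_delta i i' j j' a b = of_bool (a = i) * (of_bool (b = j') - of_bool (b = j))
      + of_bool (a = i') * (of_bool (b = j) - of_bool (b = j'))" for a b
    by (simp add: switch_delta_def of_bool_def)
  show "(\<Sum>b<n. switch_delta i i' j j' a b) = 0"
    using assms unfolding by_row by (simp add: sum.distrib sum_subtractf delta flip: sum_distrib_left)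
  have by_col: "switch_delta i i' j j' a b = of_bool (b = j') * (of_bool (a = i) - of_bool (a = i'))
      + of_bool (b = j) * (of_bool (a = i') - of_bool (a = i))" for a b
    by (simp add: switch_delta_def of_bool_def)
  show "(\<Sum>a<n. switch_delta i i' j j' a b) = 0"
    using assms unfolding by_col by (simp add: sum.distrib sum_subtractf delta flip: sum_distrib_left)
qed

text \<open>Necessity: applying a switch produces a different q-ary matrix with the same margins.\<close>
lemma unique_imp_switch_free:
  assumes qM: "qary_matrix q n n M"
    and uniq: "\<forall>M'. qary_matrix q n n M' \<and> (\<forall>i<n. row_sum n M' i = row_sum n M i)
           \<and> (\<forall>j<n. col_sum n M' j = col_sum n M j) \<longrightarrow> M' = M"
  shows "switch_free q {..<n} M"
  unfolding switch_free_def
proof (intro ballI impI notI)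
  fix i i' j j' assume mem: "i \<in> {..<n}" "i' \<in> {..<n}" "j \<in> {..<n}" "j' \<in> {..<n}"
    and d: "i \<noteq> i'" "j \<noteq> j'" and c: "0 < M i j" "0 < M i' j'" "M i j' < q - 1" "M i' j < q - 1"
  let ?d = "switch_delta i i' j j'"
  define M' where "M' a b = nat (int (M a b) + ?d a b)" for a b
  have M'int: "int (M' a b) = int (M a b) + ?d a b" for a b
    using c d by (auto simp: M'_def switch_delta_def)
  have qM': "qary_matrix q n n M'"
    unfolding qary_matrix_def
  proof (intro allI conjI impI)
    fix a b
    assume ab: "a < n \<and> b < n"
    have "M a b < q" using qM ab unfolding qary_matrix_def by blast
    hence "int (M a b) + ?d a b < int q" using c d by (auto simp: switch_delta_def)
    then show "M' a b < q" using M'int[of a b] by linarith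
  next
    fix a b
    show "\<not> (a < n \<and> b < n) \<Longrightarrow> M' a b = 0"
      using qM mem unfolding qary_matrix_def M'_def switch_delta_def by auto
  qed
  have "M' = M"
  proof (rule uniq[rule_format], intro conjI allI impI)
    show "qary_matrix q n n M'" by fact
    fix a
    have "(\<Sum>b<n. int (M' a b)) = (\<Sum>b<n. int (M a b))"
      using switch_delta_sums(1)[of i n i' j j' a] mem by (simp add: M'int sum.distrib)
    then show "row_sum n M' a = row_sum n M a" unfolding row_sum_def by (simp only: flip: of_nat_sum)
  next
    fix b
    have "(\<Sum>a<n. int (M' a b)) = (\<Sum>a<n. int (M a b))"
      using switch_delta_sums(2)[of i n i' j j' b] mem by (simp add: M'int sum.distrib)
    then show "col_sum n M' b = col_sum n M b" unfolding col_sum_def by (simp only: flip: of_nat_sum)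
  qed
  moreover have "M' i j \<noteq> M i j"
    using M'int[of i j] d by (auto simp: switch_delta_def)
  ultimately show False by simp
qed

theorem strong_lonesum_iff_switch_free:
  assumes q: "q \<ge> 2" and qM: "qary_matrix q n n M"
  shows "strong_lonesum q n n M \<longleftrightarrow> switch_free q {..<n} M"
  using unique_imp_switch_free[OF qM] switch_free_imp_unique[OF q _ qM] qM
  unfolding strong_lonesum_def by blast


subsection \<open>Symmetric switch-free matrices on an index set\<close>

text \<open>Symmetric q-ary matrices supported on I x I.  Working with arbitrary finite index sets
  (instead of {..<n}) lets us delete rows and columns without renumbering.\<close>
definition sym_qary :: "nat \<Rightarrow> nat set \<Rightarrow> mat \<Rightarrow> bool" where
  "sym_qary q I M \<longleftrightarrow> (\<forall>i j. (i \<in> I \<and> j \<in> I \<longrightarrow> M i j < q) \<and>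
     (\<not> (i \<in> I \<and> j \<in> I) \<longrightarrow> M i j = 0) \<and> M i j = M j i)"

definition SLS :: "nat \<Rightarrow> nat set \<Rightarrow> mat set" where
  "SLS q I = {M. sym_qary q I M \<and> switch_free q I M}"

definition zero_row :: "nat set \<Rightarrow> mat \<Rightarrow> nat \<Rightarrow> bool" where
  "zero_row I M i \<longleftrightarrow> (\<forall>j\<in>I. M i j = 0)"

definition full_row :: "nat \<Rightarrow> nat set \<Rightarrow> mat \<Rightarrow> nat \<Rightarrow> bool" where
  "full_row q I M i \<longleftrightarrow> (\<forall>j\<in>I. M i j = q - 1)"

definition NoZero :: "nat \<Rightarrow> nat set \<Rightarrow> mat set" where
  "NoZero q I = {M \<in> SLS q I. \<forall>i\<in>I. \<not> zero_row I M i}"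

definition HasZero :: "nat \<Rightarrow> nat set \<Rightarrow> mat set" where
  "HasZero q I = {M \<in> SLS q I. \<exists>i\<in>I. zero_row I M i}"

definition HasFull :: "nat \<Rightarrow> nat set \<Rightarrow> mat set" where
  "HasFull q I = {M \<in> SLS q I. \<exists>i\<in>I. full_row q I M i}"

definition Primitive :: "nat \<Rightarrow> nat set \<Rightarrow> mat set" where
  "Primitive q I = {M \<in> SLS q I. \<forall>i\<in>I. \<not> zero_row I M i \<and> \<not> full_row q I M i}"

text \<open>Entry-wise complement x \<mapsto> q-1-x; it maps SLS q I to itself and swaps zero and full rows.\<close>
definition complement :: "nat \<Rightarrow> nat set \<Rightarrow> mat \<Rightarrow> mat" where
  "complement q I M = (\<lambda>a b. if a \<in> I \<and> b \<in> I then q - 1 - M a b else 0)"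

lemma sym_qary_lt: "sym_qary q I M \<Longrightarrow> i \<in> I \<Longrightarrow> j \<in> I \<Longrightarrow> M i j < q"
  unfolding sym_qary_def by blast

lemma sym_qary_out: "sym_qary q I M \<Longrightarrow> \<not> (i \<in> I \<and> j \<in> I) \<Longrightarrow> M i j = 0"
  unfolding sym_qary_def by blast

lemma sym_qary_sym: "sym_qary q I M \<Longrightarrow> M i j = M j i"
  unfolding sym_qary_def by blast

lemma sym_qaryI:
  "(\<And>i j. i \<in> I \<Longrightarrow> j \<in> I \<Longrightarrow> M i j < q) \<Longrightarrow> (\<And>i j. \<not> (i \<in> I \<and> j \<in> I) \<Longrightarrow> M i j = 0)
   \<Longrightarrow> (\<And>i j. M i j = M j i) \<Longrightarrow> sym_qary q I M"
  unfolding sym_qary_def by blast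

lemma SLS_D: assumes "M \<in> SLS q I" shows "sym_qary q I M" "switch_free q I M"
  using assms by (auto simp: SLS_def)

text \<open>A matrix supported on I x I is determined by its restriction to I x I, whose entries lie
  in {..<q}; hence there are only finitely many.\<close>
lemma finite_SLS:
  assumes "finite I" shows "finite (SLS q I)"
proof -
  let ?F = "(\<lambda>f a b. if a \<in> I \<and> b \<in> I then f (a, b) else 0) ` (PiE (I \<times> I) (\<lambda>_. {..<q}))"
  have "finite ?F" using assms by (intro finite_imageI finite_PiE) auto
  moreover have "SLS q I \<subseteq> ?F"
  proof
    fix M assume "M \<in> SLS q I"
    hence qM: "sym_qary q I M" by (simp add: SLS_def)
    let ?f = "restrict (\<lambda>(a, b). M a b) (I \<times> I)"
    have "?f \<in> PiE (I \<times> I) (\<lambda>_. {..<q})" using qM by (auto simp: sym_qary_def)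
    moreover have "M = (\<lambda>a b. if a \<in> I \<and> b \<in> I then ?f (a, b) else 0)"
      using qM by (auto simp: sym_qary_def fun_eq_iff)
    ultimately show "M \<in> ?F" by blast
  qed
  ultimately show ?thesis by (rule finite_subset[rotated])
qed

lemma B_eq_card_SLS:
  assumes q: "q \<ge> 2"
  shows "B n q = card (SLS q {..<n})"
proof -
  have "{M. strong_lonesum q n n M \<and> (\<forall>i j. M i j = M j i)} = SLS q {..<n}"
  proof (intro equalityI subsetI)
    fix M assume M: "M \<in> {M. strong_lonesum q n n M \<and> (\<forall>i j. M i j = M j i)}"
    then have qa: "qary_matrix q n n M" and sym: "\<forall>i j. M i j = M j i"
      and sl: "strong_lonesum q n n M" by (auto simp: strong_lonesum_def)
    have "sym_qary q {..<n} M" using qa sym unfolding qary_matrix_def sym_qary_def by auto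
    moreover have "switch_free q {..<n} M" using strong_lonesum_iff_switch_free[OF q qa] sl by simp
    ultimately show "M \<in> SLS q {..<n}" by (simp add: SLS_def)
  next
    fix M assume M: "M \<in> SLS q {..<n}"
    then have qM: "sym_qary q {..<n} M" and nc: "switch_free q {..<n} M" by (auto simp: SLS_def)
    have qa: "qary_matrix q n n M" using qM unfolding qary_matrix_def sym_qary_def by auto
    have sym: "\<forall>i j. M i j = M j i" using sym_qary_sym[OF qM] by blast
    show "M \<in> {M. strong_lonesum q n n M \<and> (\<forall>i j. M i j = M j i)}"
      using strong_lonesum_iff_switch_free[OF q qa] nc sym by simp
  qed
  then show ?thesis by (simp add: B_def)
qed

lemma zero_rows_removed:
  assumes M: "M \<in> SLS q I" and Z: "{i \<in> I. zero_row I M i} = Z"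
  shows "M \<in> NoZero q (I - Z)"
proof -
  have qM: "sym_qary q I M" and sf: "switch_free q I M" using SLS_D[OF M] by auto
  have row_Z: "M i j = 0" if "i \<in> Z" for i j
    using that Z sym_qary_out[OF qM, of i j] by (cases "j \<in> I") (auto simp: zero_row_def)
  have col_Z: "M i j = 0" if "j \<in> Z" for i j
    using row_Z[OF that, of i] sym_qary_sym[OF qM] by simp
  have "sym_qary q (I - Z) M"
  proof (rule sym_qaryI)
    show "M i j < q" if "i \<in> I - Z" "j \<in> I - Z" for i j using sym_qary_lt[OF qM] that by blast
    show "M i j = 0" if "\<not> (i \<in> I - Z \<and> j \<in> I - Z)" for i j
      using that row_Z col_Z sym_qary_out[OF qM] by blast
    show "M i j = M j i" for i j using sym_qary_sym[OF qM] .
  qed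
  moreover have "switch_free q (I - Z) M" using switch_free_mono[OF sf] by blast
  moreover have "\<not> zero_row (I - Z) M i" if "i \<in> I - Z" for i
  proof
    assume "zero_row (I - Z) M i"
    hence "zero_row I M i" using col_Z by (auto simp: zero_row_def)
    with that Z show False by auto
  qed
  ultimately show ?thesis by (auto simp: NoZero_def SLS_def)
qed

lemma zero_rows_added:
  assumes M: "M \<in> NoZero q (I - Z)" and Z: "Z \<subseteq> I" and q: "q > 0"
  shows "M \<in> SLS q I" "{i \<in> I. zero_row I M i} = Z"
proof -
  have qM: "sym_qary q (I - Z) M" and sf: "switch_free q (I - Z) M"
    and nz: "\<forall>i\<in>I - Z. \<not> zero_row (I - Z) M i"
    using M by (auto simp: NoZero_def SLS_def)
  have out: "M i j = 0" if "\<not> (i \<in> I - Z \<and> j \<in> I - Z)" for i j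
    using sym_qary_out[OF qM] that by blast
  have "sym_qary q I M"
  proof (rule sym_qaryI)
    show "M i j < q" if "i \<in> I" "j \<in> I" for i j
      using sym_qary_lt[OF qM] out[of i j] q by (cases "i \<in> I - Z \<and> j \<in> I - Z") auto
    show "M i j = 0" if "\<not> (i \<in> I \<and> j \<in> I)" for i j using that out by blast
    show "M i j = M j i" for i j using sym_qary_sym[OF qM] .
  qed
  moreover have "switch_free q I M"
    unfolding switch_free_def
  proof (intro ballI impI notI)
    fix i i' j j' assume *: "i \<in> I" "i' \<in> I" "j \<in> I" "j' \<in> I" "i \<noteq> i'" "j \<noteq> j'"
      "0 < M i j" "0 < M i' j'" "M i j' < q - 1" "M i' j < q - 1"
    \<comment> \<open>the positive entries of a switch lie outside the zero rows and columns\<close>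
    have "i \<in> I - Z \<and> j \<in> I - Z" using *(7) out[of i j] by (cases "i \<in> I - Z \<and> j \<in> I - Z") auto
    moreover have "i' \<in> I - Z \<and> j' \<in> I - Z" using *(8) out[of i' j'] by (cases "i' \<in> I - Z \<and> j' \<in> I - Z") auto
    ultimately show False using switch_free_E[OF sf, of i i' j j'] * by blast
  qed
  ultimately show "M \<in> SLS q I" by (simp add: SLS_def)
  show "{i \<in> I. zero_row I M i} = Z"
  proof (intro equalityI subsetI)
    fix i assume "i \<in> {i \<in> I. zero_row I M i}"
    hence "i \<in> I" "zero_row (I - Z) M i" by (auto simp: zero_row_def)
    then show "i \<in> Z" using nz by auto
  next
    fix i assume "i \<in> Z"
    then show "i \<in> {i \<in> I. zero_row I M i}" using Z out by (auto simp: zero_row_def)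
  qed
qed

lemma card_SLS_by_zero_rows:
  assumes fin: "finite I" and q: "q > 0"
  shows "card {M \<in> SLS q I. P {i \<in> I. zero_row I M i}} =
    (\<Sum>Z\<in>{Z. Z \<subseteq> I \<and> P Z}. card (NoZero q (I - Z)))"
proof -
  have "{M \<in> SLS q I. P {i \<in> I. zero_row I M i}} =
      (\<Union>Z\<in>{Z. Z \<subseteq> I \<and> P Z}. {M \<in> SLS q I. {i \<in> I. zero_row I M i} = Z})"
    by auto
  also have "card \<dots> = (\<Sum>Z\<in>{Z. Z \<subseteq> I \<and> P Z}. card {M \<in> SLS q I. {i \<in> I. zero_row I M i} = Z})"
    using fin finite_SLS[OF fin, of q] by (intro card_UN_disjoint) (auto simp: finite_subset)
  also have "\<dots> = (\<Sum>Z\<in>{Z. Z \<subseteq> I \<and> P Z}. card (NoZero q (I - Z)))"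
  proof (rule sum.cong[OF refl])
    fix Z assume "Z \<in> {Z. Z \<subseteq> I \<and> P Z}"
    then have Z: "Z \<subseteq> I" by simp
    have "{M \<in> SLS q I. {i \<in> I. zero_row I M i} = Z} = NoZero q (I - Z)"
    proof (intro equalityI subsetI)
      fix M assume "M \<in> {M \<in> SLS q I. {i \<in> I. zero_row I M i} = Z}"
      then show "M \<in> NoZero q (I - Z)" using zero_rows_removed by blast
    next
      fix M assume "M \<in> NoZero q (I - Z)"
      then show "M \<in> {M \<in> SLS q I. {i \<in> I. zero_row I M i} = Z}"
        using zero_rows_added[OF _ Z q] by blast
    qed
    then show "card {M \<in> SLS q I. {i \<in> I. zero_row I M i} = Z} = card (NoZero q (I - Z))" by simp
  qed
  finally show ?thesis .
qed

lemma card_HasZero: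
  assumes "finite I" "q > 0"
  shows "card (HasZero q I) = (\<Sum>Z\<in>{Z. Z \<subseteq> I \<and> Z \<noteq> {}}. card (NoZero q (I - Z)))"
proof -
  have "HasZero q I = {M \<in> SLS q I. {i \<in> I. zero_row I M i} \<noteq> {}}" by (auto simp: HasZero_def)
  then show ?thesis using card_SLS_by_zero_rows[OF assms, of "\<lambda>Z. Z \<noteq> {}"] by simp
qed

lemma complement_SLS:
  assumes M: "M \<in> SLS q I" shows "complement q I M \<in> SLS q I"
proof -
  have qM: "sym_qary q I M" and sf: "switch_free q I M" using SLS_D[OF M] by auto
  have "sym_qary q I (complement q I M)"
  proof (rule sym_qaryI)
    show "complement q I M i j < q" if "i \<in> I" "j \<in> I" for i j
      using that sym_qary_lt[OF qM, of i j] by (simp add: complement_def)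
    show "complement q I M i j = 0" if "\<not> (i \<in> I \<and> j \<in> I)" for i j
      using that by (auto simp: complement_def)
    show "complement q I M i j = complement q I M j i" for i j
      using sym_qary_sym[OF qM, of i j] by (auto simp: complement_def)
  qed
  moreover have "switch_free q I (complement q I M)"
    unfolding switch_free_def
  proof (intro ballI impI notI)
    fix i i' j j' assume *: "i \<in> I" "i' \<in> I" "j \<in> I" "j' \<in> I" "i \<noteq> i'" "j \<noteq> j'"
      "0 < complement q I M i j" "0 < complement q I M i' j'"
      "complement q I M i j' < q - 1" "complement q I M i' j < q - 1"
    \<comment> \<open>a switch of the complement is a switch of M with the columns exchanged\<close>
    then have "0 < M i j'" "0 < M i' j" "M i j < q - 1" "M i' j' < q - 1"
      unfolding complement_def by auto
    then show False using switch_free_E[OF sf, of i i' j' j] * by auto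
  qed
  ultimately show ?thesis by (simp add: SLS_def)
qed

lemma complement_complement:
  assumes M: "M \<in> SLS q I" shows "complement q I (complement q I M) = M"
proof (intro ext)
  fix a b
  show "complement q I (complement q I M) a b = M a b"
    using sym_qary_lt[OF SLS_D(1)[OF M], of a b] sym_qary_out[OF SLS_D(1)[OF M], of a b]
    by (auto simp: complement_def)
qed

lemma complement_inj: "inj_on (complement q I) (SLS q I)"
proof (rule inj_onI)
  fix M M' assume "M \<in> SLS q I" "M' \<in> SLS q I" "complement q I M = complement q I M'"
  then show "M = M'" using complement_complement by metis
qed

lemma complement_zero_row:
  assumes M: "M \<in> SLS q I" and i: "i \<in> I"
  shows "zero_row I (complement q I M) i \<longleftrightarrow> full_row q I M i"
proof -
  have "(complement q I M i j = 0) \<longleftrightarrow> M i j = q - 1" if "j \<in> I" for j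
    using sym_qary_lt[OF SLS_D(1)[OF M] i that] i that by (auto simp: complement_def)
  then show ?thesis by (auto simp: zero_row_def full_row_def)
qed

lemma complement_full_row:
  assumes M: "M \<in> SLS q I" and i: "i \<in> I"
  shows "full_row q I (complement q I M) i \<longleftrightarrow> zero_row I M i"
  using complement_zero_row[OF complement_SLS[OF M] i] complement_complement[OF M] by simp

lemma complement_image_eq:
  assumes S: "S \<subseteq> SLS q I" "T \<subseteq> SLS q I"
    and ST: "\<And>M. M \<in> S \<Longrightarrow> complement q I M \<in> T" and TS: "\<And>M. M \<in> T \<Longrightarrow> complement q I M \<in> S"
  shows "card T = card S"
proof -
  have "T = complement q I ` S"
  proof (intro equalityI subsetI)
    fix M assume "M \<in> T"
    then have "M = complement q I (complement q I M)"
      using complement_complement S(2) by auto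
    with TS[OF \<open>M \<in> T\<close>] show "M \<in> complement q I ` S" by blast
  qed (use ST in auto)
  moreover have "inj_on (complement q I) S" using complement_inj S(1) by (rule inj_on_subset)
  ultimately show ?thesis by (simp add: card_image)
qed

lemma card_HasFull: "card (HasFull q I) = card (HasZero q I)"
  by (rule complement_image_eq)
     (auto simp: HasFull_def HasZero_def complement_SLS complement_zero_row complement_full_row)

text \<open>A matrix cannot have both a zero row and a full row (their common entry would be both
  0 and q-1), so SLS splits into primitive matrices and two equinumerous classes.\<close>
lemma SLS_split:
  assumes q: "q \<ge> 2" and fin: "finite I"
  shows "card (SLS q I) = card (Primitive q I) + 2 * card (HasZero q I)"
    "card (SLS q I) = card (NoZero q I) + card (HasZero q I)"
proof -
  have fS: "finite (SLS q I)" using finite_SLS[OF fin] .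
  have "HasZero q I \<inter> HasFull q I = {}"
  proof (rule ccontr)
    assume "HasZero q I \<inter> HasFull q I \<noteq> {}"
    then obtain M i k where M: "M \<in> SLS q I" "i \<in> I" "zero_row I M i" "k \<in> I" "full_row q I M k"
      by (auto simp: HasZero_def HasFull_def)
    have "M i k = 0" "M k i = q - 1" using M by (auto simp: zero_row_def full_row_def)
    moreover have "M i k = M k i" using sym_qary_sym[OF SLS_D(1)[OF M(1)]] .
    ultimately show False using q by simp
  qed
  moreover have "SLS q I = Primitive q I \<union> (HasZero q I \<union> HasFull q I)"
    "Primitive q I \<inter> (HasZero q I \<union> HasFull q I) = {}"
    by (auto simp: Primitive_def HasZero_def HasFull_def)
  moreover have "finite (HasZero q I)" "finite (HasFull q I)" "finite (Primitive q I)"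
    using fS by (auto simp: HasZero_def HasFull_def Primitive_def)
  ultimately show "card (SLS q I) = card (Primitive q I) + 2 * card (HasZero q I)"
    using card_HasFull[of q I] by (simp add: card_Un_disjoint)
  have "SLS q I = NoZero q I \<union> HasZero q I" "NoZero q I \<inter> HasZero q I = {}"
    by (auto simp: NoZero_def HasZero_def)
  moreover have "finite (NoZero q I)" "finite (HasZero q I)"
    using fS by (auto simp: NoZero_def HasZero_def)
  ultimately show "card (SLS q I) = card (NoZero q I) + card (HasZero q I)"
    by (simp add: card_Un_disjoint)
qed

subsection \<open>Structure of primitive matrices\<close>

text \<open>Low rows have all entries below q-1, positive rows have all entries above 0.  By
  symmetry a low row is also a low column, which is what makes these rows useful.\<close>
definition low_rows :: "nat \<Rightarrow> nat set \<Rightarrow> mat \<Rightarrow> nat set" where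
  "low_rows q I M = {j \<in> I. \<forall>c\<in>I. M j c < q - 1}"

definition pos_rows :: "nat set \<Rightarrow> mat \<Rightarrow> nat set" where
  "pos_rows I M = {k \<in> I. \<forall>c\<in>I. 0 < M k c}"

lemma rows_comparable:
  assumes M: "M \<in> SLS q I" and i: "i \<in> I" and i': "i' \<in> I"
  shows "(\<forall>c\<in>I. M i c \<le> M i' c) \<or> (\<forall>c\<in>I. M i' c \<le> M i c)"
proof (rule ccontr)
  assume "\<not> ?thesis"
  then obtain a b where ab: "a \<in> I" "b \<in> I" "M i a > M i' a" "M i' b > M i b"
    by (auto simp: not_le)
  have lt: "M x y < q" if "x \<in> I" "y \<in> I" for x y using sym_qary_lt[OF SLS_D(1)[OF M] that] .
  have "a \<noteq> b" using ab by auto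
  moreover have "i \<noteq> i'" using ab by auto
  moreover have "M i b < q - 1" using ab lt[OF i' ab(2)] by linarith
  moreover have "M i' a < q - 1" using ab lt[OF i ab(1)] by linarith
  ultimately show False using switch_free_E[OF SLS_D(2)[OF M] i i' ab(1) ab(2)] ab by auto
qed

lemma Primitive_D:
  assumes "M \<in> Primitive q I"
  shows "M \<in> SLS q I" "\<And>i. i \<in> I \<Longrightarrow> \<not> zero_row I M i" "\<And>i. i \<in> I \<Longrightarrow> \<not> full_row q I M i"
  using assms by (auto simp: Primitive_def)

text \<open>A primitive matrix has a low row: take a row s of maximal sum and an entry M s c < q-1;
  by comparability every row is below row s, so column c, i.e. row c, is low.\<close>
lemma low_rows_nonempty:
  assumes M: "M \<in> Primitive q I" and fin: "finite I" and ne: "I \<noteq> {}"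
  shows "low_rows q I M \<noteq> {}"
proof -
  have S: "M \<in> SLS q I" using Primitive_D[OF M] by simp
  define rs where "rs i = (\<Sum>c\<in>I. M i c)" for i
  have "Max (rs ` I) \<in> rs ` I" using fin ne by (intro Max_in) auto
  then obtain s where s1: "s \<in> I" "rs s = Max (rs ` I)" by auto
  have s: "s \<in> I" "\<forall>i\<in>I. rs i \<le> rs s"
    using s1 fin by auto
  have "\<not> full_row q I M s" using Primitive_D(3)[OF M s(1)] .
  then obtain c where c: "c \<in> I" "M s c \<noteq> q - 1" by (auto simp: full_row_def)
  have "M s c < q" using sym_qary_lt[OF SLS_D(1)[OF S] s(1) c(1)] .
  with c have sc: "M s c < q - 1" by linarith
  have "\<forall>i\<in>I. M c i < q - 1"
  proof
    fix i assume i: "i \<in> I"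
    have "M i c \<le> M s c"
    proof (cases "\<forall>x\<in>I. M i x \<le> M s x")
      case True then show ?thesis using c by auto
    next
      case False
      then have le: "\<forall>x\<in>I. M s x \<le> M i x" using rows_comparable[OF S i s(1)] by auto
      have "rs s \<le> rs i" unfolding rs_def using le by (intro sum_mono) auto
      with s(2) i have "rs s = rs i" by (meson antisym)
      then have "M s c = M i c" using sum_mono_inv[of "M s" I "M i" c] le c fin unfolding rs_def by auto
      then show ?thesis by simp
    qed
    then show "M c i < q - 1" using sc sym_qary_sym[OF SLS_D(1)[OF S], of i c] by simp
  qed
  then have "c \<in> low_rows q I M" using c by (simp add: low_rows_def)
  then show ?thesis by auto
qed

text \<open>Complementation exchanges low and positive rows and preserves primitivity, so every
  statement about low rows has a dual about positive rows.\<close>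
lemma rows_complement:
  assumes M: "M \<in> SLS q I" and q: "q \<ge> 2"
  shows "low_rows q I (complement q I M) = pos_rows I M" "pos_rows I (complement q I M) = low_rows q I M"
proof -
  have lt: "M x y < q" if "x \<in> I" "y \<in> I" for x y using sym_qary_lt[OF SLS_D(1)[OF M] that] .
  show "low_rows q I (complement q I M) = pos_rows I M"
    unfolding low_rows_def pos_rows_def complement_def using lt q by auto
  show "pos_rows I (complement q I M) = low_rows q I M"
    unfolding low_rows_def pos_rows_def complement_def using lt q by auto
qed

lemma complement_Primitive:
  assumes M: "M \<in> Primitive q I" shows "complement q I M \<in> Primitive q I"
proof -
  have S: "M \<in> SLS q I" using Primitive_D[OF M] by simp
  show ?thesis unfolding Primitive_def
    using complement_SLS[OF S] complement_zero_row[OF S] complement_full_row[OF S] Primitive_D[OF M] by auto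
qed

lemma pos_rows_nonempty:
  assumes M: "M \<in> Primitive q I" and fin: "finite I" and ne: "I \<noteq> {}" and q: "q \<ge> 2"
  shows "pos_rows I M \<noteq> {}"
  using low_rows_nonempty[OF complement_Primitive[OF M] fin ne] rows_complement[OF Primitive_D(1)[OF M] q] by simp

lemma row_two:
  assumes M: "M \<in> SLS q I" and i: "i \<in> I" and nz: "\<not> zero_row I M i" and nf: "\<not> full_row q I M i"
    and two: "x \<in> I" "y \<in> I" "x \<noteq> y"
  shows "\<exists>a\<in>I. \<exists>b\<in>I. a \<noteq> b \<and> 0 < M i b \<and> M i a < q - 1"
proof -
  have lt: "M i y' < q" if "y' \<in> I" for y' using sym_qary_lt[OF SLS_D(1)[OF M] i that] .
  obtain b where b: "b \<in> I" "0 < M i b" using nz by (auto simp: zero_row_def)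
  obtain a where a0: "a \<in> I" "M i a \<noteq> q - 1" using nf unfolding full_row_def by blast
  have a: "a \<in> I" "M i a < q - 1" using a0 lt[OF a0(1)] by auto
  show ?thesis
  proof (cases "a = b")
    case False then show ?thesis using a b by (intro bexI[of _ a] bexI[of _ b]) auto
  next
    case True
    have "\<exists>c. c \<in> I \<and> c \<noteq> a" using two by (cases "x = a") auto
    then obtain c where c: "c \<in> I" "c \<noteq> a" by blast
    show ?thesis
    proof (cases "0 < M i c")
      case True then show ?thesis using c a by (intro bexI[of _ a] bexI[of _ c]) auto
    next
      case False
      then have "M i c < q - 1" using a by linarith
      then show ?thesis using c b \<open>a = b\<close> by (intro bexI[of _ c] bexI[of _ b]) auto
    qed
  qed
qed

text \<open>No row of a primitive matrix (with at least two indices) is both low and positive: together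
  with any other row it would form a switch.\<close>
lemma low_pos_disjoint:
  assumes M: "M \<in> Primitive q I" and two: "x \<in> I" "y \<in> I" "x \<noteq> y"
  shows "low_rows q I M \<inter> pos_rows I M = {}"
proof (rule ccontr)
  assume "low_rows q I M \<inter> pos_rows I M \<noteq> {}"
  then obtain z where z: "z \<in> I" "\<forall>c\<in>I. M z c < q - 1" "\<forall>c\<in>I. 0 < M z c"
    by (auto simp: low_rows_def pos_rows_def)
  obtain i where i: "i \<in> I" "i \<noteq> z" using two by blast
  obtain a b where ab: "a \<in> I" "b \<in> I" "a \<noteq> b" "0 < M i b" "M i a < q - 1"
    using row_two[OF Primitive_D(1)[OF M] i(1) Primitive_D(2)[OF M i(1)] Primitive_D(3)[OF M i(1)] two] by blast
  show False
    using switch_free_E[OF SLS_D(2)[OF Primitive_D(1)[OF M]] z(1) i(1) ab(1) ab(2)] i ab z by auto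
qed

text \<open>Two low rows and two positive rows always form a switch; hence one of the two kinds is
  unique.\<close>
lemma not_two_low_two_pos:
  assumes M: "M \<in> SLS q I" and j: "j1 \<in> low_rows q I M" "j2 \<in> low_rows q I M" "j1 \<noteq> j2"
    and k: "k1 \<in> pos_rows I M" "k2 \<in> pos_rows I M" "k1 \<noteq> k2"
  shows False
proof -
  have "M k2 j1 < q - 1" "M k1 j2 < q - 1"
    using j k sym_qary_sym[OF SLS_D(1)[OF M]] by (auto simp: low_rows_def pos_rows_def)
  then show False
    using switch_free_E[OF SLS_D(2)[OF M], of k1 k2 j1 j2] j k by (auto simp: low_rows_def pos_rows_def)
qed

lemma pos_row_full_under_low_row:
  assumes M: "M \<in> SLS q I" and j: "j \<in> low_rows q I M" and k: "k \<in> pos_rows I M" and jk: "j \<noteq> k"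
    and b: "b \<in> I" "0 < M j b"
  shows "M k b = q - 1"
proof (rule ccontr)
  assume ne: "M k b \<noteq> q - 1"
  have jI: "j \<in> I" and kI: "k \<in> I" using j k by (auto simp: low_rows_def pos_rows_def)
  have "M k b < q" using sym_qary_lt[OF SLS_D(1)[OF M] kI b(1)] .
  with ne have lt: "M k b < q - 1" by linarith
  define a where "a = (if b = k then j else k)"
  have aI: "a \<in> I" using jI kI by (simp add: a_def)
  have ab: "a \<noteq> b" using jk by (auto simp: a_def)
  have "0 < M k a" using k aI by (auto simp: pos_rows_def)
  moreover have "M j a < q - 1" using j aI by (auto simp: low_rows_def)
  ultimately show False
    using switch_free_E[OF SLS_D(2)[OF M] kI jI aI b(1)] jk ab b lt by auto
qed

text \<open>So the matrix consists of
  row/column j (entries in {1..q-2} on K), full rows/columns K, and an arbitrary symmetric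
  switch-free block on the remaining indices.\<close>
lemma unique_low_row_structure:
  assumes M: "M \<in> Primitive q I" and q: "q \<ge> 2" and J: "low_rows q I M = {j}" and k: "k \<in> pos_rows I M" and jk: "j \<noteq> k"
  shows "M j j = 0"
    and "\<And>c. c \<in> I \<Longrightarrow> c \<notin> pos_rows I M \<Longrightarrow> M j c = 0"
    and "\<And>k' c. k' \<in> pos_rows I M \<Longrightarrow> c \<in> I \<Longrightarrow> c \<noteq> j \<Longrightarrow> M k' c = q - 1"
proof -
  have S: "M \<in> SLS q I" using Primitive_D[OF M] by simp
  have qM: "sym_qary q I M" using SLS_D[OF S] by simp
  have jJ: "j \<in> low_rows q I M" using J by simp
  have jI: "j \<in> I" and kI: "k \<in> I" using jJ k by (auto simp: low_rows_def pos_rows_def)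
  have sym: "M x y = M y x" for x y using sym_qary_sym[OF qM] .
  show "M j j = 0"
  proof (rule ccontr)
    assume "M j j \<noteq> 0"
    hence "M k j = q - 1" using pos_row_full_under_low_row[OF S jJ k jk jI] by simp
    moreover have "M j k < q - 1" using jJ kI by (auto simp: low_rows_def)
    ultimately show False using sym[of k j] by simp
  qed
  show "M j c = 0" if c: "c \<in> I" "c \<notin> pos_rows I M" for c
  proof (rule ccontr)
    assume "M j c \<noteq> 0"
    hence pos: "0 < M j c" by simp
    obtain d where d: "d \<in> I" "M c d = 0" using c by (auto simp: pos_rows_def)
    have "d \<noteq> j" using d pos sym[of c j] by auto
    obtain b where b: "b \<in> I" "0 < M d b" using Primitive_D(2)[OF M d(1)] by (auto simp: zero_row_def)
    have "b \<noteq> c" using b d sym[of c d] by auto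
    have "M j b < q - 1" using jJ b by (auto simp: low_rows_def)
    moreover have "M d c < q - 1" using d sym[of c d] q by simp
    ultimately show False
      using switch_free_E[OF SLS_D(2)[OF S] jI d(1) c(1) b(1)] \<open>d \<noteq> j\<close> \<open>b \<noteq> c\<close> pos b by auto
  qed
  show "M k' c = q - 1" if k': "k' \<in> pos_rows I M" and c: "c \<in> I" "c \<noteq> j" for k' c
  proof (rule ccontr)
    assume ne: "M k' c \<noteq> q - 1"
    have k'I: "k' \<in> I" using k' by (simp add: pos_rows_def)
    have "M k' c < q" using sym_qary_lt[OF qM k'I c(1)] .
    with ne have lt: "M k' c < q - 1" by linarith
    have "c \<notin> low_rows q I M" using J c by auto
    then obtain e where e: "e \<in> I" "\<not> M c e < q - 1" using c by (auto simp: low_rows_def)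
    have e2: "M c e = q - 1" using e sym_qary_lt[OF qM c(1) e(1)] by linarith
    have "e \<noteq> k'" using e2 lt sym[of k' c] by auto
    have "0 < M c e" using e2 q by simp
    moreover have "0 < M j k'" using k' jI sym[of j k'] by (auto simp: pos_rows_def)
    moreover have "M c k' < q - 1" using lt sym[of k' c] by simp
    moreover have "M j e < q - 1" using jJ e by (auto simp: low_rows_def)
    ultimately show False
      using switch_free_E[OF SLS_D(2)[OF S] c(1) jI e(1) k'I] c \<open>e \<noteq> k'\<close> by auto
  qed
qed

subsection \<open>Counting primitive matrices\<close>

definition assemble :: "nat \<Rightarrow> nat set \<Rightarrow> nat \<Rightarrow> nat set \<Rightarrow> (nat \<Rightarrow> nat) \<Rightarrow> mat \<Rightarrow> mat" where
  "assemble q I j K c N = (\<lambda>a b. if a \<in> I \<and> b \<in> I then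
     (if a = j \<and> b = j then 0 else if a = j then (if b \<in> K then c b else 0)
      else if b = j then (if a \<in> K then c a else 0)
      else if a \<in> K \<or> b \<in> K then q - 1 else N a b) else 0)"

definition PrimJK :: "nat \<Rightarrow> nat set \<Rightarrow> nat \<Rightarrow> nat set \<Rightarrow> mat set" where
  "PrimJK q I j K = {M \<in> Primitive q I. low_rows q I M = {j} \<and> pos_rows I M = K}"

lemma assemble_out: "\<not> (a \<in> I \<and> b \<in> I) \<Longrightarrow> assemble q I j K c N a b = 0"
  unfolding assemble_def by auto

locale assembly =
  fixes q :: nat and I :: "nat set" and j :: nat and K :: "nat set" and c :: "nat \<Rightarrow> nat" and N :: mat
  assumes q: "q \<ge> 2" and jI: "j \<in> I" and KI: "K \<subseteq> I - {j}"
    and c_range: "c \<in> PiE K (\<lambda>_. {1..<q-1})" and N_SLS: "N \<in> SLS q (I - {j} - K)"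
begin

abbreviation W :: "nat set" where "W \<equiv> I - {j} - K"

abbreviation Mb :: mat where "Mb \<equiv> assemble q I j K c N"

lemma c_bounds: "k \<in> K \<Longrightarrow> 1 \<le> c k \<and> c k < q - 1"
  using c_range by (auto simp: PiE_def Pi_def)

lemma c_lt_q: "k \<in> K \<Longrightarrow> c k < q"
  using c_bounds[of k] by linarith

lemma K_in_I: "k \<in> K \<Longrightarrow> k \<in> I \<and> k \<noteq> j"
  using KI by auto

lemma index_cases: "x \<in> I \<Longrightarrow> x = j \<or> x \<in> K \<or> x \<in> W"
  by auto

lemma entry_jj: "Mb j j = 0"
  using jI by (simp add: assemble_def)

lemma entry_row_j: "a \<in> I \<Longrightarrow> Mb j a = (if a \<in> K then c a else 0)"
  using jI KI by (auto simp: assemble_def)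

lemma entry_col_j: "a \<in> I \<Longrightarrow> Mb a j = (if a \<in> K then c a else 0)"
  using jI KI by (auto simp: assemble_def)

lemma entry_K: "a \<in> K \<Longrightarrow> b \<in> I \<Longrightarrow> b \<noteq> j \<Longrightarrow> Mb a b = q - 1 \<and> Mb b a = q - 1"
  using KI by (auto simp: assemble_def)

lemma entry_W: "a \<in> W \<Longrightarrow> b \<in> W \<Longrightarrow> Mb a b = N a b"
  by (auto simp: assemble_def)

lemma sym_qary_Mb: "sym_qary q I Mb"
proof (rule sym_qaryI)
  have qN: "sym_qary q W N" using SLS_D[OF N_SLS] by simp
  fix a b assume ab: "a \<in> I" "b \<in> I"
  consider "a = j \<or> b = j" | "a \<in> K \<or> b \<in> K" "a \<noteq> j" "b \<noteq> j" | "a \<in> W" "b \<in> W"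
    using index_cases[OF ab(1)] index_cases[OF ab(2)] by blast
  then show "Mb a b < q"
  proof cases
    case 1 then show ?thesis
      using entry_row_j[OF ab(2)] entry_col_j[OF ab(1)] c_lt_q[of a] c_lt_q[of b] q by auto
  next
    case 2 then show ?thesis using entry_K[OF _ ab(2)] entry_K[OF _ ab(1)] q by auto
  next
    case 3 then show ?thesis using entry_W[OF 3] sym_qary_lt[OF qN 3] by simp
  qed
next
  fix a b show "\<not> (a \<in> I \<and> b \<in> I) \<Longrightarrow> Mb a b = 0" by (rule assemble_out)
  show "Mb a b = Mb b a"
    using sym_qary_sym[OF SLS_D(1)[OF N_SLS], of a b] by (auto simp: assemble_def)
qed

text \<open>The rows of a switch of Mb avoid j (row j is positive only on K, where every other row
  is full) and K (rows in K are below q-1 only in column j).\<close>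
lemma switch_row_in_W:
  assumes mem: "i \<in> I" "i' \<in> I" "a \<in> I" "b \<in> I" and d: "i \<noteq> i'" "a \<noteq> b"
    and p: "0 < Mb i a" "0 < Mb i' b" "Mb i b < q - 1" "Mb i' a < q - 1"
  shows "i \<in> W"
proof -
  have "i \<noteq> j"
  proof
    assume "i = j"
    then have "a \<in> K" using p(1) entry_row_j[OF mem(3)] by (auto split: if_splits)
    then show False using entry_K[OF \<open>a \<in> K\<close> mem(2)] d \<open>i = j\<close> p(4) by auto
  qed
  moreover have "i \<notin> K"
  proof
    assume iK: "i \<in> K"
    have "b = j" using entry_K[OF iK mem(4)] p(3) by auto
    then have "i' \<in> K" using p(2) entry_col_j[OF mem(2)] by (auto split: if_splits)
    then have "a = j" using entry_K[OF \<open>i' \<in> K\<close> mem(3)] p(4) by auto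
    then show False using \<open>b = j\<close> d by simp
  qed
  ultimately show ?thesis using mem by simp
qed

text \<open>So all four indices of a switch of Mb lie in W (the columns by symmetry of Mb), and it
  would be a switch of N.\<close>
lemma switch_free_Mb: "switch_free q I Mb"
  unfolding switch_free_def
proof (intro ballI impI notI)
  fix i i' a b assume mem: "i \<in> I" "i' \<in> I" "a \<in> I" "b \<in> I" and d: "i \<noteq> i'" "a \<noteq> b"
    and p: "0 < Mb i a" "0 < Mb i' b" "Mb i b < q - 1" "Mb i' a < q - 1"
  have sym: "Mb x y = Mb y x" for x y using sym_qary_sym[OF sym_qary_Mb] .
  have "i \<in> W" using switch_row_in_W[OF mem d p] .
  moreover have "i' \<in> W" using switch_row_in_W[OF mem(2,1,4,3) d[symmetric] p(2,1,4,3)] .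
  moreover have "a \<in> W"
    using switch_row_in_W[OF mem(3,4,1,2) d(2,1)] p sym by metis
  moreover have "b \<in> W"
    using switch_row_in_W[OF mem(4,3,2,1) d(2,1)[symmetric]] p sym by metis
  ultimately show False
    using switch_free_E[OF SLS_D(2)[OF N_SLS], of i i' a b] d p entry_W by auto
qed

lemma no_full_row: "x \<in> I \<Longrightarrow> \<not> full_row q I Mb x"
proof -
  assume xI: "x \<in> I"
  have "Mb x j \<noteq> q - 1"
    using entry_jj entry_col_j[OF xI] c_bounds[of x] q by (cases "x = j"; cases "x \<in> K") auto
  then show ?thesis using jI by (auto simp: full_row_def)
qed

lemma pos_rows_Mb: "pos_rows I Mb = K"
proof (intro equalityI subsetI)
  fix x assume "x \<in> pos_rows I Mb"
  hence xI: "x \<in> I" and pos: "\<forall>b\<in>I. 0 < Mb x b" by (auto simp: pos_rows_def)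
  have "0 < Mb x j" using pos jI by blast
  then show "x \<in> K" using entry_jj entry_col_j[OF xI] by (cases "x = j") (auto split: if_splits)
next
  fix x assume xK: "x \<in> K"
  have "0 < Mb x b" if "b \<in> I" for b
    using entry_col_j[of x] entry_K[OF xK that] c_bounds[OF xK] K_in_I[OF xK] xK q by (cases "b = j") auto
  then show "x \<in> pos_rows I Mb" using K_in_I[OF xK] by (auto simp: pos_rows_def)
qed

context
  assumes Kne: "K \<noteq> {}"
begin

lemma no_zero_row: "x \<in> I \<Longrightarrow> \<not> zero_row I Mb x"
proof -
  assume xI: "x \<in> I"
  obtain k where k: "k \<in> K" using Kne by auto
  have kI: "k \<in> I" using K_in_I[OF k] by simp
  consider "x = j" | "x \<in> K" | "x \<in> W" using index_cases[OF xI] by blast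
  then have "Mb x k \<noteq> 0 \<or> Mb x x \<noteq> 0"
  proof cases
    case 1 then show ?thesis using entry_row_j[OF kI] k c_bounds[OF k] by auto
  next
    case 2 then show ?thesis using entry_K[OF 2 xI] K_in_I[OF 2] q by auto
  next
    case 3 then show ?thesis using entry_K[OF k xI] q by auto
  qed
  then show ?thesis using xI kI by (auto simp: zero_row_def)
qed

lemma low_rows_Mb: "low_rows q I Mb = {j}"
proof (intro equalityI subsetI)
  fix x assume "x \<in> low_rows q I Mb"
  hence xI: "x \<in> I" and low: "\<forall>b\<in>I. Mb x b < q - 1" by (auto simp: low_rows_def)
  obtain k where k: "k \<in> K" using Kne by auto
  show "x \<in> {j}"
  proof (rule ccontr)
    assume "x \<notin> {j}"
    then have "Mb x k = q - 1" using entry_K[OF k xI] entry_K[OF _ K_in_I[THEN conjunct1], of x k] k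
      index_cases[OF xI] by auto
    then show False using low K_in_I[OF k] by auto
  qed
next
  fix x assume "x \<in> {j}"
  have "Mb j b < q - 1" if "b \<in> I" for b using entry_row_j[OF that] c_bounds q by auto
  then show "x \<in> low_rows q I Mb" using \<open>x \<in> {j}\<close> jI by (auto simp: low_rows_def)
qed

lemma Mb_PrimJK: "Mb \<in> PrimJK q I j K"
  using sym_qary_Mb switch_free_Mb no_zero_row no_full_row low_rows_Mb pos_rows_Mb
  unfolding PrimJK_def Primitive_def SLS_def by auto

end

end

lemma assemble_PrimJK:
  assumes q: "q \<ge> 2" and jI: "j \<in> I" and KI: "K \<subseteq> I - {j}"
    and c: "c \<in> PiE K (\<lambda>_. {1..<q-1})" and N: "N \<in> SLS q (I - {j} - K)" and Kne: "K \<noteq> {}"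
  shows "assemble q I j K c N \<in> PrimJK q I j K"
proof -
  interpret assembly q I j K c N using assms by unfold_locales
  show ?thesis using Mb_PrimJK[OF Kne] .
qed

lemma SLS_block:
  assumes M: "M \<in> SLS q I" and WI: "W \<subseteq> I"
  shows "(\<lambda>a b. if a \<in> W \<and> b \<in> W then M a b else 0) \<in> SLS q W"
proof -
  let ?N = "\<lambda>a b. if a \<in> W \<and> b \<in> W then M a b else 0"
  have qM: "sym_qary q I M" and sf: "switch_free q I M" using SLS_D[OF M] by auto
  have "sym_qary q W ?N"
    using sym_qary_lt[OF qM] sym_qary_sym[OF qM] WI by (intro sym_qaryI) (auto simp: subset_iff)
  moreover have "switch_free q W ?N"
    using switch_free_cong[OF switch_free_mono[OF sf WI], of ?N] by simp
  ultimately show ?thesis by (simp add: SLS_def)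
qed

lemma PrimJK_disassemble:
  assumes q: "q \<ge> 2" and jI: "j \<in> I" and KI: "K \<subseteq> I - {j}" and Kne: "K \<noteq> {}"
    and M: "M \<in> PrimJK q I j K"
  defines "W \<equiv> I - {j} - K"
  defines "N \<equiv> \<lambda>a b. if a \<in> W \<and> b \<in> W then M a b else 0"
  shows "restrict (M j) K \<in> PiE K (\<lambda>_. {1..<q-1})" and "N \<in> SLS q W"
    and "M = assemble q I j K (restrict (M j) K) N"
proof -
  have MP: "M \<in> Primitive q I" and J: "low_rows q I M = {j}" and K: "pos_rows I M = K"
    using M by (auto simp: PrimJK_def)
  have S: "M \<in> SLS q I" using Primitive_D[OF MP] by simp
  have qM: "sym_qary q I M" using SLS_D[OF S] by auto
  have sym: "M x y = M y x" for x y using sym_qary_sym[OF qM] .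
  obtain k where k: "k \<in> K" using Kne by auto
  have kK: "k \<in> pos_rows I M" and jk: "j \<noteq> k" using k K KI by auto
  note shape = unique_low_row_structure[OF MP q J kK jk, unfolded K]
  show "restrict (M j) K \<in> PiE K (\<lambda>_. {1..<q-1})"
  proof (rule restrict_PiE_iff[THEN iffD2], intro ballI)
    fix x assume x: "x \<in> K"
    have "0 < M x j" using x K jI by (auto simp: pos_rows_def)
    moreover have "M j x < q - 1" using J x KI by (auto simp: low_rows_def)
    ultimately show "M j x \<in> {1..<q-1}" using sym[of x j] by auto
  qed
  show "N \<in> SLS q W" unfolding N_def W_def by (rule SLS_block[OF S]) auto
  show "M = assemble q I j K (restrict (M j) K) N"
  proof (intro ext)
    fix a b
    consider "\<not> (a \<in> I \<and> b \<in> I)" | "a \<in> I" "b \<in> I" "a = j \<or> b = j"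
      | "a \<in> I" "b \<in> I" "a \<noteq> j" "b \<noteq> j" "a \<in> K \<or> b \<in> K" | "a \<in> W" "b \<in> W"
      by (auto simp: W_def)
    then show "M a b = assemble q I j K (restrict (M j) K) N a b"
    proof cases
      case 1 then show ?thesis using sym_qary_out[OF qM 1] assemble_out[OF 1] by simp
    next
      case 2 then show ?thesis using shape(1) shape(2) sym[of a b] by (auto simp: assemble_def)
    next
      case 3 then show ?thesis using shape(3) sym[of a b] by (auto simp: assemble_def)
    next
      case 4 then show ?thesis by (auto simp: assemble_def N_def W_def)
    qed
  qed
qed

lemma assemble_inj:
  assumes jI: "j \<in> I" and KI: "K \<subseteq> I - {j}"
    and c: "c \<in> PiE K (\<lambda>_. {1..<q-1})" and c': "c' \<in> PiE K (\<lambda>_. {1..<q-1})"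
    and N: "N \<in> SLS q (I - {j} - K)" and N': "N' \<in> SLS q (I - {j} - K)"
    and eq: "assemble q I j K c N = assemble q I j K c' N'"
  shows "c = c' \<and> N = N'"
proof
  show "c = c'"
  proof (rule PiE_ext[OF c c'])
    fix x assume x: "x \<in> K"
    have "assemble q I j K c N j x = assemble q I j K c' N' j x" using eq by simp
    moreover have "x \<in> I" "x \<noteq> j" using x KI by auto
    ultimately show "c x = c' x" using x jI by (simp add: assemble_def)
  qed
  show "N = N'"
  proof (intro ext)
    fix a b
    show "N a b = N' a b"
    proof (cases "a \<in> I - {j} - K \<and> b \<in> I - {j} - K")
      case True
      have "assemble q I j K c N a b = assemble q I j K c' N' a b" using eq by simp
      then show ?thesis using True by (auto simp: assemble_def)
    next
      case False
      then show ?thesis using sym_qary_out[OF SLS_D(1)[OF N] False] sym_qary_out[OF SLS_D(1)[OF N'] False] by simp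
    qed
  qed
qed

text \<open>Hence PrimJK q I j K is in bijection with {1..q-2}^K times SLS q (I - {j} - K).\<close>
lemma card_PrimJK:
  assumes q: "q \<ge> 2" and fin: "finite I" and jI: "j \<in> I" and KI: "K \<subseteq> I - {j}" and Kne: "K \<noteq> {}"
  shows "card (PrimJK q I j K) = (q - 2) ^ card K * card (SLS q (I - {j} - K))"
proof -
  let ?D = "PiE K (\<lambda>_. {1..<q-1}) \<times> SLS q (I - {j} - K)"
  let ?f = "\<lambda>(c, N). assemble q I j K c N"
  have "PrimJK q I j K = ?f ` ?D"
  proof (intro equalityI subsetI)
    fix M assume M: "M \<in> PrimJK q I j K"
    show "M \<in> ?f ` ?D"
      using PrimJK_disassemble[OF q jI KI Kne M]
      by (intro image_eqI[of _ _ "(restrict (M j) K, (\<lambda>a b. if a \<in> I - {j} - K \<and> b \<in> I - {j} - K then M a b else 0))"]) auto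
  next
    fix M assume "M \<in> ?f ` ?D"
    then show "M \<in> PrimJK q I j K" using assemble_PrimJK[OF q jI KI _ _ Kne] by auto
  qed
  moreover have "inj_on ?f ?D"
  proof (rule inj_onI)
    fix p p' assume p: "p \<in> ?D" "p' \<in> ?D" "?f p = ?f p'"
    obtain c N c' N' where "p = (c, N)" "p' = (c', N')" by (cases p, cases p')
    then show "p = p'" using p assemble_inj[OF jI KI, of c q c' N N'] by auto
  qed
  moreover have "finite K" using fin KI finite_subset by blast
  moreover have "card {1..<q-1} = q - 2" by simp
  ultimately show ?thesis
    by (simp only: card_image card_cartesian_product card_PiE prod_constant)
qed

definition PrimOneLow :: "nat \<Rightarrow> nat set \<Rightarrow> mat set" where
  "PrimOneLow q I = {M \<in> Primitive q I. \<exists>j. low_rows q I M = {j}}"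

definition PrimOnePos :: "nat \<Rightarrow> nat set \<Rightarrow> mat set" where
  "PrimOnePos q I = {M \<in> Primitive q I. \<exists>k. pos_rows I M = {k}}"

lemma finite_Primitive: "finite I \<Longrightarrow> finite (Primitive q I)"
  using finite_SLS[of I q] by (rule finite_subset[rotated]) (auto simp: Primitive_def)

lemma finite_PrimJK: "finite I \<Longrightarrow> finite (PrimJK q I j K)"
  using finite_Primitive[of I q] by (rule finite_subset[rotated]) (auto simp: PrimJK_def)

lemma Primitive_OneLow_OnePos:
  assumes fin: "finite I" and ne: "I \<noteq> {}" and q: "q \<ge> 2"
  shows "Primitive q I = PrimOneLow q I \<union> PrimOnePos q I"
proof (intro equalityI subsetI)
  fix M assume M: "M \<in> Primitive q I"
  obtain j1 where j1: "j1 \<in> low_rows q I M" using low_rows_nonempty[OF M fin ne] by auto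
  obtain k1 where k1: "k1 \<in> pos_rows I M" using pos_rows_nonempty[OF M fin ne q] by auto
  show "M \<in> PrimOneLow q I \<union> PrimOnePos q I"
  proof (rule ccontr)
    assume "M \<notin> PrimOneLow q I \<union> PrimOnePos q I"
    then have "low_rows q I M \<noteq> {j1}" "pos_rows I M \<noteq> {k1}"
      using M by (auto simp: PrimOneLow_def PrimOnePos_def)
    then obtain j2 k2 where "j2 \<in> low_rows q I M" "j2 \<noteq> j1" "k2 \<in> pos_rows I M" "k2 \<noteq> k1"
      using j1 k1 by blast
    then show False using not_two_low_two_pos[OF Primitive_D(1)[OF M] j1 _ _ k1] by blast
  qed
qed (auto simp: PrimOneLow_def PrimOnePos_def)

lemma card_PrimOnePos:
  assumes q: "q \<ge> 2" shows "card (PrimOnePos q I) = card (PrimOneLow q I)"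
proof (rule complement_image_eq)
  show "PrimOneLow q I \<subseteq> SLS q I" "PrimOnePos q I \<subseteq> SLS q I"
    by (auto simp: PrimOneLow_def PrimOnePos_def Primitive_def)
  fix M
  show "complement q I M \<in> PrimOnePos q I" if M: "M \<in> PrimOneLow q I"
  proof -
    have "M \<in> Primitive q I" "M \<in> SLS q I" using M by (auto simp: PrimOneLow_def Primitive_def)
    then show ?thesis using M complement_Primitive rows_complement[OF _ q]
      by (auto simp: PrimOneLow_def PrimOnePos_def)
  qed
  show "complement q I M \<in> PrimOneLow q I" if M: "M \<in> PrimOnePos q I"
  proof -
    have "M \<in> Primitive q I" "M \<in> SLS q I" using M by (auto simp: PrimOnePos_def Primitive_def)
    then show ?thesis using M complement_Primitive rows_complement[OF _ q]
      by (auto simp: PrimOneLow_def PrimOnePos_def)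
  qed
qed

text \<open>Inclusion-exclusion over the two (covering) classes.\<close>
lemma card_Primitive_PrimOneLow:
  assumes fin: "finite I" and q: "q \<ge> 2" and ne: "I \<noteq> {}"
  shows "card (Primitive q I) + card (PrimOneLow q I \<inter> PrimOnePos q I) = 2 * card (PrimOneLow q I)"
proof -
  have f1: "finite (PrimOneLow q I)" "finite (PrimOnePos q I)"
    using finite_Primitive[OF fin, of q] by (auto simp: PrimOneLow_def PrimOnePos_def intro: finite_subset[rotated])
  show ?thesis
    using card_Un_Int[OF f1] Primitive_OneLow_OnePos[OF fin ne q] card_PrimOnePos[OF q, of I] by simp
qed

lemma card_UN_PrimJK:
  assumes fin: "finite I" and J: "finite J" and Ks: "\<And>j. j \<in> J \<Longrightarrow> finite (Ks j)"
  shows "card (\<Union>j\<in>J. \<Union>K\<in>Ks j. PrimJK q I j K) = (\<Sum>j\<in>J. \<Sum>K\<in>Ks j. card (PrimJK q I j K))"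
proof -
  have fin_cls: "finite (PrimJK q I j K)" for j K using fin by (rule finite_PrimJK)
  have disj: "j = j' \<and> K = K'" if "M \<in> PrimJK q I j K" "M \<in> PrimJK q I j' K'" for M j j' K K'
    using that by (auto simp: PrimJK_def)
  have "card (\<Union>j\<in>J. \<Union>K\<in>Ks j. PrimJK q I j K) = (\<Sum>j\<in>J. card (\<Union>K\<in>Ks j. PrimJK q I j K))"
    using J Ks fin_cls by (intro card_UN_disjoint) (auto dest: disj)
  also have "\<dots> = (\<Sum>j\<in>J. \<Sum>K\<in>Ks j. card (PrimJK q I j K))"
    using Ks fin_cls by (intro sum.cong refl card_UN_disjoint) (auto dest: disj)
  finally show ?thesis .
qed

lemma PrimOneLow_UN:
  assumes fin: "finite I" and q: "q \<ge> 2" and two: "x \<in> I" "y \<in> I" "x \<noteq> y"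
    and P: "\<And>M. M \<in> S \<longleftrightarrow> M \<in> PrimOneLow q I \<and> Q (card (pos_rows I M))"
  shows "S = (\<Union>j\<in>I. \<Union>K\<in>{K. K \<subseteq> I - {j} \<and> K \<noteq> {} \<and> Q (card K)}. PrimJK q I j K)"
proof (intro equalityI subsetI)
  fix M assume "M \<in> S"
  then obtain j where j: "low_rows q I M = {j}" and MP: "M \<in> Primitive q I"
    and Q: "Q (card (pos_rows I M))" using P by (auto simp: PrimOneLow_def)
  have jI: "j \<in> I" using j by (auto simp: low_rows_def)
  have "pos_rows I M \<noteq> {}" using pos_rows_nonempty[OF MP fin _ q] two by auto
  moreover have "pos_rows I M \<subseteq> I - {j}"
    using low_pos_disjoint[OF MP two] j by (auto simp: pos_rows_def)
  ultimately show "M \<in> (\<Union>j\<in>I. \<Union>K\<in>{K. K \<subseteq> I - {j} \<and> K \<noteq> {} \<and> Q (card K)}. PrimJK q I j K)"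
    using jI j MP Q by (auto simp: PrimJK_def)
qed (auto simp: PrimJK_def PrimOneLow_def P)

lemma card_PrimOneLow_class:
  assumes fin: "finite I" and q: "q \<ge> 2" and two: "x \<in> I" "y \<in> I" "x \<noteq> y"
    and P: "\<And>M. M \<in> S \<longleftrightarrow> M \<in> PrimOneLow q I \<and> Q (card (pos_rows I M))"
  shows "card S = (\<Sum>j\<in>I. \<Sum>K\<in>{K. K \<subseteq> I - {j} \<and> K \<noteq> {} \<and> Q (card K)}.
    (q - 2) ^ card K * card (SLS q (I - {j} - K)))"
  unfolding PrimOneLow_UN[OF fin q two P]
  using fin by (simp add: card_UN_PrimJK card_PrimJK[OF q fin])

subsection \<open>Recurrences: the counts depend only on the size of the index set\<close>

lemma card_Primitive_empty: "card (Primitive q {}) = 1"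
proof -
  have "Primitive q {} = {\<lambda>a b. 0}"
    by (auto simp: Primitive_def SLS_def sym_qary_def switch_free_def fun_eq_iff)
  then show ?thesis by simp
qed

lemma card_Primitive_singleton:
  assumes q: "q \<ge> 2"
  shows "card (Primitive q {x}) = q - 2"
proof -
  let ?f = "\<lambda>v a b. if a = x \<and> b = x then v else (0::nat)"
  have "Primitive q {x} = ?f ` {1..<q-1}"
  proof (intro equalityI subsetI)
    fix M assume M: "M \<in> Primitive q {x}"
    then have qM: "sym_qary q {x} M" by (simp add: Primitive_def SLS_def)
    have "M x x \<noteq> 0" using Primitive_D(2)[OF M, of x] by (simp add: zero_row_def)
    moreover have "M x x \<noteq> q - 1" using Primitive_D(3)[OF M, of x] by (simp add: full_row_def)
    moreover have "M x x < q" using sym_qary_lt[OF qM] by simp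
    ultimately have "M x x \<in> {1..<q-1}" by auto
    moreover have "M = ?f (M x x)" using sym_qary_out[OF qM] by (auto simp: fun_eq_iff)
    ultimately show "M \<in> ?f ` {1..<q-1}" by blast
  next
    fix M assume "M \<in> ?f ` {1..<q-1}"
    then obtain v where v: "v \<in> {1..<q-1}" "M = ?f v" by auto
    have "sym_qary q {x} M" using v by (auto simp: sym_qary_def)
    moreover have "switch_free q {x} M" by (auto simp: switch_free_def)
    ultimately show "M \<in> Primitive q {x}" using v by (auto simp: Primitive_def SLS_def zero_row_def full_row_def)
  qed
  moreover have "inj_on ?f {1..<q-1}"
    by (intro inj_onI) (metis (mono_tags))
  ultimately show ?thesis by (simp add: card_image)
qed

lemma sum_subsets_card:
  assumes "finite A"
  shows "(\<Sum>Z\<in>{Z. Z \<subseteq> A \<and> Z \<noteq> {}}. f (card Z)) = (\<Sum>k=1..card A. (card A choose k) * f k)"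
proof -
  have fin: "finite {Z. Z \<subseteq> A \<and> Z \<noteq> {}}" using assms by auto
  have img: "card ` {Z. Z \<subseteq> A \<and> Z \<noteq> {}} \<subseteq> {1..card A}"
  proof
    fix k assume "k \<in> card ` {Z. Z \<subseteq> A \<and> Z \<noteq> {}}"
    then obtain Z where Z: "Z \<subseteq> A" "Z \<noteq> {}" "k = card Z" by auto
    have "finite Z" using Z assms finite_subset by auto
    then have "card Z > 0" using Z by auto
    moreover have "card Z \<le> card A" using Z assms card_mono by auto
    ultimately show "k \<in> {1..card A}" using Z by auto
  qed
  have "(\<Sum>Z\<in>{Z. Z \<subseteq> A \<and> Z \<noteq> {}}. f (card Z)) =
        (\<Sum>k=1..card A. \<Sum>Z\<in>{Z \<in> {Z. Z \<subseteq> A \<and> Z \<noteq> {}}. card Z = k}. f (card Z))"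
    by (rule sum.group[OF fin _ img, symmetric]) simp
  also have "\<dots> = (\<Sum>k=1..card A. (card A choose k) * f k)"
  proof (rule sum.cong[OF refl])
    fix k assume k: "k \<in> {1..card A}"
    have "{Z \<in> {Z. Z \<subseteq> A \<and> Z \<noteq> {}}. card Z = k} = {Z. Z \<subseteq> A \<and> card Z = k}"
      using k by auto
    then show "(\<Sum>Z\<in>{Z \<in> {Z. Z \<subseteq> A \<and> Z \<noteq> {}}. card Z = k}. f (card Z)) = (card A choose k) * f k"
      using n_subsets[OF assms, of k] by simp
  qed
  finally show ?thesis .
qed

definition sls_count :: "nat \<Rightarrow> nat \<Rightarrow> nat" where "sls_count q n = card (SLS q {..<n})"
definition nozero_count :: "nat \<Rightarrow> nat \<Rightarrow> nat" where "nozero_count q n = card (NoZero q {..<n})"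
definition prim_count :: "nat \<Rightarrow> nat \<Rightarrow> nat" where "prim_count q n = card (Primitive q {..<n})"

text \<open>The right-hand sides of the recurrences for matrices with a zero row and for primitive
  matrices with one low row, in terms of the counts for smaller sizes.\<close>
definition haszero_count :: "nat \<Rightarrow> nat \<Rightarrow> nat" where
  "haszero_count q n = (\<Sum>k=1..n. (n choose k) * nozero_count q (n - k))"

definition onelow_count :: "nat \<Rightarrow> nat \<Rightarrow> nat" where
  "onelow_count q n = n * (\<Sum>k=1..n-1. ((n-1) choose k) * ((q - 2) ^ k * sls_count q (n - 1 - k)))"

lemma HasZero_formula:
  assumes fin: "finite I" and q: "q \<ge> 2"
    and IH: "\<And>I'. finite I' \<Longrightarrow> card I' < card I \<Longrightarrow> card (NoZero q I') = nozero_count q (card I')"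
  shows "card (HasZero q I) = haszero_count q (card I)"
proof -
  have "card (HasZero q I) = (\<Sum>Z\<in>{Z. Z \<subseteq> I \<and> Z \<noteq> {}}. card (NoZero q (I - Z)))"
    using card_HasZero[OF fin] q by simp
  also have "\<dots> = (\<Sum>Z\<in>{Z. Z \<subseteq> I \<and> Z \<noteq> {}}. nozero_count q (card I - card Z))"
  proof (rule sum.cong[OF refl])
    fix Z assume Z: "Z \<in> {Z. Z \<subseteq> I \<and> Z \<noteq> {}}"
    have fZ: "finite Z" using Z fin finite_subset by auto
    have cd: "card (I - Z) = card I - card Z" using Z fZ by (simp add: card_Diff_subset)
    have "card (I - Z) < card I" using Z fin by (intro psubset_card_mono) auto
    then show "card (NoZero q (I - Z)) = nozero_count q (card I - card Z)" using IH[of "I - Z"] fin cd by simp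
  qed
  also have "\<dots> = haszero_count q (card I)"
    unfolding haszero_count_def by (rule sum_subsets_card[OF fin])
  finally show ?thesis .
qed

lemma PrimOneLow_formula:
  assumes fin: "finite I" and q: "q \<ge> 2" and two: "x \<in> I" "y \<in> I" "x \<noteq> y"
    and IH: "\<And>I'. finite I' \<Longrightarrow> card I' < card I \<Longrightarrow> card (SLS q I') = sls_count q (card I')"
  shows "card (PrimOneLow q I) = onelow_count q (card I)"
proof -
  let ?n = "card I"
  have "card (PrimOneLow q I) = (\<Sum>j\<in>I. \<Sum>K\<in>{K. K \<subseteq> I - {j} \<and> K \<noteq> {}}.
      (q - 2) ^ card K * card (SLS q (I - {j} - K)))"
    using card_PrimOneLow_class[OF fin q two, of "PrimOneLow q I" "\<lambda>_. True"] by simp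
  also have "\<dots> = (\<Sum>j\<in>I. \<Sum>k=1..?n-1. ((?n-1) choose k) * ((q - 2) ^ k * sls_count q (?n - 1 - k)))"
  proof (rule sum.cong[OF refl])
    fix j assume j: "j \<in> I"
    have cj: "card (I - {j}) = ?n - 1" using j fin by simp
    have "(\<Sum>K\<in>{K. K \<subseteq> I - {j} \<and> K \<noteq> {}}. (q - 2) ^ card K * card (SLS q (I - {j} - K)))
        = (\<Sum>K\<in>{K. K \<subseteq> I - {j} \<and> K \<noteq> {}}. (q - 2) ^ card K * sls_count q (?n - 1 - card K))"
    proof (rule sum.cong[OF refl])
      fix K assume K: "K \<in> {K. K \<subseteq> I - {j} \<and> K \<noteq> {}}"
      have "finite K" using K fin finite_subset by auto
      then have cd: "card (I - {j} - K) = ?n - 1 - card K"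
        using K cj by (simp add: card_Diff_subset)
      have "card (I - {j} - K) < ?n" using j fin by (intro psubset_card_mono) auto
      then show "(q - 2) ^ card K * card (SLS q (I - {j} - K)) = (q - 2) ^ card K * sls_count q (?n - 1 - card K)"
        using IH[of "I - {j} - K"] fin cd by simp
    qed
    also have "\<dots> = (\<Sum>k=1..?n-1. ((?n-1) choose k) * ((q - 2) ^ k * sls_count q (?n - 1 - k)))"
      using sum_subsets_card[of "I - {j}" "\<lambda>k. (q - 2) ^ k * sls_count q (?n - 1 - k)"] fin cj
      by simp
    finally show "(\<Sum>K\<in>{K. K \<subseteq> I - {j} \<and> K \<noteq> {}}. (q - 2) ^ card K * card (SLS q (I - {j} - K)))
        = (\<Sum>k=1..?n-1. ((?n-1) choose k) * ((q - 2) ^ k * sls_count q (?n - 1 - k)))" .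
  qed
  also have "\<dots> = onelow_count q ?n" by (simp add: onelow_count_def)
  finally show ?thesis .
qed

lemma PrimOneLowPos_formula:
  assumes fin: "finite I" and q: "q \<ge> 2" and two: "x \<in> I" "y \<in> I" "x \<noteq> y"
    and IH: "\<And>I'. finite I' \<Longrightarrow> card I' < card I \<Longrightarrow> card (SLS q I') = sls_count q (card I')"
  shows "card (PrimOneLow q I \<inter> PrimOnePos q I) = card I * ((card I - 1) * ((q - 2) * sls_count q (card I - 2)))"
proof -
  let ?n = "card I"
  have "card (PrimOneLow q I \<inter> PrimOnePos q I) = (\<Sum>j\<in>I. \<Sum>K\<in>{K. K \<subseteq> I - {j} \<and> K \<noteq> {} \<and> card K = 1}.
      (q - 2) ^ card K * card (SLS q (I - {j} - K)))"
    by (rule card_PrimOneLow_class[OF fin q two]) (auto simp: PrimOnePos_def PrimOneLow_def card_1_singleton_iff)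
  also have "\<dots> = (\<Sum>j\<in>I. \<Sum>K\<in>{K. K \<subseteq> I - {j} \<and> K \<noteq> {} \<and> card K = 1}. (q - 2) * sls_count q (?n - 2))"
  proof (intro sum.cong refl)
    fix j K assume j: "j \<in> I" and K: "K \<in> {K. K \<subseteq> I - {j} \<and> K \<noteq> {} \<and> card K = 1}"
    have "finite K" using K fin finite_subset by auto
    then have cd: "card (I - {j} - K) = ?n - 2"
      using j K fin by (simp add: card_Diff_subset)
    have "card (I - {j} - K) < ?n" using j fin by (intro psubset_card_mono) auto
    then show "(q - 2) ^ card K * card (SLS q (I - {j} - K)) = (q - 2) * sls_count q (?n - 2)"
      using IH[of "I - {j} - K"] fin cd K by simp
  qed
  also have "\<dots> = (\<Sum>j\<in>I. (?n - 1) * ((q - 2) * sls_count q (?n - 2)))"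
  proof (rule sum.cong[OF refl])
    fix j assume j: "j \<in> I"
    have "{K. K \<subseteq> I - {j} \<and> K \<noteq> {} \<and> card K = 1} = {K. K \<subseteq> I - {j} \<and> card K = 1}" by auto
    moreover have "card {K. K \<subseteq> I - {j} \<and> card K = 1} = ?n - 1"
      using n_subsets[of "I - {j}" 1] fin j by simp
    ultimately show "(\<Sum>K\<in>{K. K \<subseteq> I - {j} \<and> K \<noteq> {} \<and> card K = 1}. (q - 2) * sls_count q (?n - 2)) =
        (?n - 1) * ((q - 2) * sls_count q (?n - 2))" by simp
  qed
  also have "\<dots> = ?n * ((?n - 1) * ((q - 2) * sls_count q (?n - 2)))" by simp
  finally show ?thesis .
qed

lemma Primitive_recurrence:
  assumes fin: "finite I" and q: "q \<ge> 2" and two: "card I \<ge> 2"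
    and IH: "\<And>I'. finite I' \<Longrightarrow> card I' < card I \<Longrightarrow> card (SLS q I') = sls_count q (card I')"
  shows "card (Primitive q I) + card I * ((card I - 1) * ((q - 2) * sls_count q (card I - 2)))
    = 2 * onelow_count q (card I)"
proof -
  obtain x y where xy: "x \<in> I" "y \<in> I" "x \<noteq> y"
    using two fin by (metis card_le_Suc0_iff_eq not_less_eq_eq numeral_2_eq_2)
  then have "I \<noteq> {}" by auto
  then show ?thesis
    using card_Primitive_PrimOneLow[OF fin q] PrimOneLow_formula[OF fin q xy IH]
      PrimOneLowPos_formula[OF fin q xy IH] by simp
qed

lemma Primitive_small:
  assumes fin: "finite I" and q: "q \<ge> 2" and small: "card I < 2"
  shows "card (Primitive q I) = prim_count q (card I)"
proof -
  consider "card I = 0" | "card I = 1" using small by linarith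
  then show ?thesis
  proof cases
    case 1
    then show ?thesis using fin by (simp add: prim_count_def)
  next
    case 2
    then obtain x where "I = {x}" using card_1_singletonE by blast
    moreover have "{..<1::nat} = {0}" by auto
    ultimately show ?thesis using card_Primitive_singleton[OF q] by (simp add: prim_count_def)
  qed
qed

text \<open>Strong induction on |I|: by the recurrences, the numbers of matrices in SLS q I and in
  NoZero q I are the same functions of |I| as for the index set {..<|I|}.\<close>
lemma card_depends_on_size:
  assumes q: "q \<ge> 2"
  shows "finite I \<Longrightarrow> card (SLS q I) = sls_count q (card I) \<and> card (NoZero q I) = nozero_count q (card I)"
proof (induction "card I" arbitrary: I rule: less_induct)
  case less
  let ?n = "card I"
  let ?C = "{..<?n}"
  have fC: "finite ?C" and cC: "card ?C = ?n" by auto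
  have IH1: "card (SLS q I') = sls_count q (card I')" if "finite I'" "card I' < ?n" for I'
    using less.hyps that by blast
  have IH0: "card (NoZero q I') = nozero_count q (card I')" if "finite I'" "card I' < ?n" for I'
    using less.hyps that by blast
  have Z: "card (HasZero q I) = haszero_count q ?n" "card (HasZero q ?C) = haszero_count q ?n"
    using HasZero_formula[OF less.prems q] HasZero_formula[OF fC q] IH0 cC by auto
  have P: "card (Primitive q I) = prim_count q ?n"
  proof (cases "?n \<ge> 2")
    case True
    then show ?thesis
      using Primitive_recurrence[OF less.prems q True IH1] Primitive_recurrence[OF fC q, unfolded cC, OF True IH1]
      by (simp add: prim_count_def)
  qed (use Primitive_small[OF less.prems q] in simp)
  have "card (SLS q I) = sls_count q ?n"
    using SLS_split(1)[OF q less.prems] SLS_split(1)[OF q fC] Z P by (simp add: sls_count_def prim_count_def)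
  moreover have "card (NoZero q I) = nozero_count q ?n"
    using SLS_split(2)[OF q less.prems] SLS_split(2)[OF q fC] Z calculation by (simp add: sls_count_def nozero_count_def)
  ultimately show ?case by simp
qed

lemma count_recurrences:
  assumes q: "q \<ge> 2"
  shows "sls_count q n = nozero_count q n + haszero_count q n"
    and "sls_count q n = prim_count q n + 2 * haszero_count q n"
    and "prim_count q 0 = 1" and "prim_count q 1 = q - 2"
    and "n \<ge> 2 \<Longrightarrow> prim_count q n + n * ((n - 1) * ((q - 2) * sls_count q (n - 2))) = 2 * onelow_count q n"
proof -
  have fC: "finite {..<n}" by simp
  have Z: "card (HasZero q {..<n}) = haszero_count q n"
    using HasZero_formula[OF fC q] card_depends_on_size[OF q] by simp
  show "sls_count q n = nozero_count q n + haszero_count q n"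
    using SLS_split(2)[OF q fC] Z by (simp add: sls_count_def nozero_count_def)
  show "sls_count q n = prim_count q n + 2 * haszero_count q n"
    using SLS_split(1)[OF q fC] Z by (simp add: sls_count_def prim_count_def)
  show "prim_count q 0 = 1" using card_Primitive_empty by (simp add: prim_count_def)
  have "{..<1::nat} = {0}" by auto
  then show "prim_count q 1 = q - 2" using card_Primitive_singleton[OF q] by (simp add: prim_count_def)
  show "prim_count q n + n * ((n - 1) * ((q - 2) * sls_count q (n - 2))) = 2 * onelow_count q n"
    if "n \<ge> 2"
    using Primitive_recurrence[OF fC q, unfolded card_lessThan, OF that] card_depends_on_size[OF q]
    by (simp add: prim_count_def)
qed

subsection \<open>Exponential generating functions\<close>

definition egf :: "(nat \<Rightarrow> nat) \<Rightarrow> real fps" where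
  "egf a = Abs_fps (\<lambda>n. real (a n) / fact n)"

lemma egf_mult_nth:
  fixes a b :: "nat \<Rightarrow> real"
  shows "(Abs_fps (\<lambda>n. a n / fact n) * Abs_fps (\<lambda>n. b n / fact n)) $ n = (\<Sum>k\<le>n. real (n choose k) * a k * b (n - k)) / fact n"
proof -
  have "(Abs_fps (\<lambda>n. a n / fact n) * Abs_fps (\<lambda>n. b n / fact n)) $ n = (\<Sum>k=0..n. a k / fact k * (b (n - k) / fact (n - k)))" by (simp add: fps_mult_nth)
  also have "\<dots> = (\<Sum>k\<le>n. real (n choose k) * a k * b (n - k) / fact n)"
  proof (rule sum.cong)
    show "{0..n} = {..n}" by auto
  next
    fix k assume "k \<in> {..n}"
    then have k: "k \<le> n" by simp
    show "a k / fact k * (b (n - k) / fact (n - k)) = real (n choose k) * a k * b (n - k) / fact n"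
      using binomial_fact[OF k, where 'a=real] by (simp add: field_simps)
  qed
  also have "\<dots> = (\<Sum>k\<le>n. real (n choose k) * a k * b (n - k)) / fact n"
    by (simp add: sum_divide_distrib)
  finally show ?thesis .
qed

lemma exp_egf: "fps_exp (c::real) = Abs_fps (\<lambda>n. c ^ n / fact n)"
  by (simp add: fps_eq_iff)

lemma exp1_egf: "fps_exp (c::real) - 1 = Abs_fps (\<lambda>n. (if n = 0 then 0 else c ^ n) / fact n)"
  by (simp add: fps_eq_iff)

lemma sum_atMost_split_zero:
  fixes f :: "nat \<Rightarrow> 'a::comm_monoid_add"
  shows "(\<Sum>k\<le>n. f k) = f 0 + (\<Sum>k=1..n. f k)"
proof -
  have "{..n} - {0} = {1..n}" by auto
  then show ?thesis using sum.remove[of "{..n}" 0 f] by simp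
qed

text \<open>G = e^x N: a matrix is its zero rows plus a matrix without zero rows.\<close>
lemma egf_SLS_NoZero:
  assumes q: "q \<ge> 2"
  shows "egf (sls_count q) = fps_exp 1 * egf (nozero_count q)"
proof (rule fps_ext)
  fix n
  have "(fps_exp 1 * egf (nozero_count q)) $ n = (\<Sum>k\<le>n. real (n choose k) * 1 * real (nozero_count q (n - k))) / fact n"
    unfolding exp_egf egf_def using egf_mult_nth[of "\<lambda>n. 1 ^ n" "\<lambda>n. real (nozero_count q n)" n] by simp
  also have "(\<Sum>k\<le>n. real (n choose k) * 1 * real (nozero_count q (n - k))) = real (nozero_count q n + haszero_count q n)"
    unfolding haszero_count_def by (simp add: sum_atMost_split_zero[of _ n])
  also have "\<dots> = real (sls_count q n)" using count_recurrences(1)[OF q, of n] by simp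
  finally show "egf (sls_count q) $ n = (fps_exp 1 * egf (nozero_count q)) $ n" by (simp add: egf_def)
qed

text \<open>G = P + 2 (e^x - 1) N: primitive matrices, those with zero rows, those with full rows.\<close>
lemma egf_SLS_Primitive:
  assumes q: "q \<ge> 2"
  shows "egf (sls_count q) = egf (prim_count q) + (fps_exp 1 - 1) * egf (nozero_count q) + (fps_exp 1 - 1) * egf (nozero_count q)"
proof (rule fps_ext)
  fix n
  have "((fps_exp 1 - 1) * egf (nozero_count q)) $ n
     = (\<Sum>k\<le>n. real (n choose k) * (if k = 0 then 0 else 1 ^ k) * real (nozero_count q (n - k))) / fact n"
    unfolding exp1_egf egf_def
    using egf_mult_nth[of "\<lambda>n. if n = 0 then 0 else 1 ^ n" "\<lambda>n. real (nozero_count q n)" n] by simp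
  also have "(\<Sum>k\<le>n. real (n choose k) * (if k = 0 then 0 else 1 ^ k) * real (nozero_count q (n - k))) = real (haszero_count q n)"
    unfolding haszero_count_def by (simp add: sum_atMost_split_zero[of _ n])
  finally have "((fps_exp 1 - 1) * egf (nozero_count q)) $ n = real (haszero_count q n) / fact n" .
  moreover have "real (sls_count q n) = real (prim_count q n) + real (haszero_count q n) + real (haszero_count q n)"
    using count_recurrences(2)[OF q, of n] by simp
  moreover have "(egf (prim_count q) + (fps_exp 1 - 1) * egf (nozero_count q) + (fps_exp 1 - 1) * egf (nozero_count q)) $ n
      = egf (prim_count q) $ n + ((fps_exp 1 - 1) * egf (nozero_count q)) $ n + ((fps_exp 1 - 1) * egf (nozero_count q)) $ n"
    by (simp only: fps_add_nth)
  ultimately show "egf (sls_count q) $ n = (egf (prim_count q) + (fps_exp 1 - 1) * egf (nozero_count q) + (fps_exp 1 - 1) * egf (nozero_count q)) $ n"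
    by (simp add: egf_def add_divide_distrib)
qed

lemma coeff_cancel:
  fixes S g p F x :: real
  assumes "F > 0" "x \<ge> 0"
  shows "(2 * ((x + 2) * S) - (x + 2) * ((x + 1) * (p * g))) / ((x + 2) * ((x + 1) * F))
       = 2 * (S / ((x + 1) * F)) - p * (g / F)"
proof -
  have a: "x + 2 \<noteq> 0" "x + 1 \<noteq> 0" "F \<noteq> 0" using assms by auto
  have "(2 * ((x + 2) * S) - (x + 2) * ((x + 1) * (p * g))) = (x + 2) * (2 * S - (x + 1) * (p * g))"
    by (simp add: algebra_simps)
  then have "(2 * ((x + 2) * S) - (x + 2) * ((x + 1) * (p * g))) / ((x + 2) * ((x + 1) * F))
      = (2 * S - (x + 1) * (p * g)) / ((x + 1) * F)"
    using a by simp
  also have "\<dots> = 2 * S / ((x + 1) * F) - ((x + 1) * (p * g)) / ((x + 1) * F)"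
    by (rule diff_divide_distrib)
  also have "((x + 1) * (p * g)) / ((x + 1) * F) = p * g / F" using a by simp
  finally show ?thesis by simp
qed

lemma prim_count_coeff:
  fixes m :: nat
  assumes q: "q \<ge> 2"
  defines "p \<equiv> real q - 2"
  defines "S \<equiv> (\<Sum>k=1..Suc m. real (Suc m choose k) * p ^ k * real (sls_count q (Suc m - k)))"
  shows "real (prim_count q (Suc (Suc m))) / fact (Suc (Suc m))
    = 2 * (S / fact (Suc m)) - p * (real (sls_count q m) / fact m)"
proof -
  let ?n = "Suc (Suc m)"
  have pq: "real (q - 2) = p" using q by (simp add: p_def of_nat_diff)
  have "real (prim_count q ?n) + real ?n * (real (?n - 1) * (real (q - 2) * real (sls_count q (?n - 2))))
      = 2 * real (onelow_count q ?n)"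
    using arg_cong[OF count_recurrences(5)[OF q, of ?n], of real]
    by (simp only: of_nat_add of_nat_mult of_nat_numeral)
  moreover have "real (onelow_count q ?n) = real ?n * S"
    unfolding onelow_count_def S_def using pq by (simp add: of_nat_sum mult.assoc) (simp add: algebra_simps)
  ultimately have pn: "real (prim_count q ?n) = 2 * ((real m + 2) * S) - (real m + 2) * ((real m + 1) * (p * real (sls_count q m)))"
    unfolding pq by (simp add: add.commute)
  have f1: "fact ?n = (real m + 2) * ((real m + 1) * (fact m :: real))" by (simp add: algebra_simps)
  have f2: "fact (Suc m) = (real m + 1) * (fact m :: real)" by (simp add: algebra_simps)
  show ?thesis unfolding pn f1 f2 by (rule coeff_cancel) simp_all
qed

lemma egf_Primitive:
  assumes q: "q \<ge> 2"
  defines "p \<equiv> real q - 2"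
  shows "egf (prim_count q) = 1 + fps_const p * fps_X + fps_X * ((fps_exp p - 1) * egf (sls_count q)
      + (fps_exp p - 1) * egf (sls_count q) - fps_const p * (fps_X * egf (sls_count q)))"
proof (rule fps_ext)
  fix n
  let ?G = "egf (sls_count q)"
  let ?Y = "(fps_exp p - 1) * ?G"
  let ?H = "?Y + ?Y - fps_const p * (fps_X * ?G)"
  have Yn: "?Y $ m = (\<Sum>k=1..m. real (m choose k) * p ^ k * real (sls_count q (m - k))) / fact m" for m
  proof -
    have "?Y $ m = (\<Sum>k\<le>m. real (m choose k) * (if k = 0 then 0 else p ^ k) * real (sls_count q (m - k))) / fact m"
      unfolding exp1_egf egf_def
      using egf_mult_nth[of "\<lambda>n. if n = 0 then 0 else p ^ n" "\<lambda>n. real (sls_count q n)" m] by simp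
    then show ?thesis by (simp add: sum_atMost_split_zero[of _ m])
  qed
  have XG: "(fps_X * ?G) $ m = (if m = 0 then 0 else real (sls_count q (m - 1)) / fact (m - 1))" for m
    by (simp add: egf_def)
  have Hn: "?H $ m = 2 * (?Y $ m) - p * (fps_X * ?G) $ m" for m
    by (simp only: fps_add_nth fps_sub_nth fps_mult_left_const_nth mult_2)
  consider "n = 0" | "n = 1" | m where "n = Suc (Suc m)"
    by (metis One_nat_def not0_implies_Suc)
  then show "egf (prim_count q) $ n = (1 + fps_const p * fps_X + fps_X * ?H) $ n"
  proof cases
    case 1
    then show ?thesis using count_recurrences(3)[OF q] by (simp add: egf_def)
  next
    case 2
    have "?H $ 0 = 0" using Hn[of 0] Yn[of 0] XG[of 0] by simp
    then show ?thesis using 2 count_recurrences(4)[OF q] q by (simp add: egf_def p_def of_nat_diff)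
  next
    case 3
    then show ?thesis
      using prim_count_coeff[OF q, of m] Hn[of "Suc m"] Yn[of "Suc m"] XG[of "Suc m"]
      by (simp add: egf_def p_def)
  qed
qed


subsection \<open>The generating function of B_n(q)\<close>

lemma Fq_diagonal:
  fixes q :: nat
  shows "Fq q fps_X fps_X = 1 - fps_exp 1 - fps_exp 1
     + (1 - fps_X - fps_X - fps_const (real q - 2) * fps_X * fps_X + fps_X * fps_exp (real q - 2)
        + fps_X * fps_exp (real q - 2)) * (fps_exp 1 * fps_exp 1)"
proof -
  have c: "(of_nat q - 2 :: real fps) = fps_const (real q - 2)"
    by (simp add: fps_eq_iff fps_numeral_nth)
  have x2: "(fps_X + fps_X :: real fps) = fps_const 2 * fps_X"
    by (simp add: fps_eq_iff fps_numeral_nth)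
  have e2: "fps_exp (1::real) oo (fps_X + fps_X) = fps_exp 1 * fps_exp 1"
    unfolding x2 fps_exp_compose_linear using fps_exp_add_mult[of "1::real" 1] by simp
  show ?thesis unfolding Fq_def e2 c by simp
qed

text \<open>Eliminating N and P from the three functional equations.\<close>
lemma egf_SLS_times_denominator:
  assumes q: "q \<ge> 2"
  shows "egf (sls_count q) * (1 - Fq q fps_X fps_X) = (1 + (of_nat q - 2) * fps_X) * fps_exp 2"
proof -
  define G where "G = egf (sls_count q)"
  define N where "N = egf (nozero_count q)"
  define P where "P = egf (prim_count q)"
  define E where "E = fps_exp (1::real)"
  define Ep where "Ep = fps_exp (real q - 2)"
  define c where "c = fps_const (real q - 2)"
  define X where "X = (fps_X :: real fps)"
  have a: "G = E * N" using egf_SLS_NoZero[OF q] by (simp add: G_def E_def N_def)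
  have b: "G = P + (E - 1) * N + (E - 1) * N" using egf_SLS_Primitive[OF q] by (simp add: G_def E_def N_def P_def)
  have cc: "P = 1 + c * X + X * ((Ep - 1) * G + (Ep - 1) * G - c * (X * G))"
    using egf_Primitive[OF q] by (simp add: G_def P_def Ep_def c_def X_def)
  have F: "Fq q fps_X fps_X = 1 - E - E + (1 - X - X - c * X * X + X * Ep + X * Ep) * (E * E)"
    using Fq_diagonal[of q] by (simp add: E_def Ep_def c_def X_def)
  have c2: "(of_nat q - 2 :: real fps) = c"
    by (simp add: c_def fps_eq_iff fps_numeral_nth)
  have e2: "fps_exp (2::real) = E * E" using fps_exp_add_mult[of "1::real" 1] by (simp add: E_def)
  have EP: "E * P = G * (2 - E)"
  proof -
    have "E * P = E * (G - (E - 1) * N - (E - 1) * N)" using b by (simp add: algebra_simps)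
    also have "\<dots> = E * G - (E - 1) * (E * N) - (E - 1) * (E * N)" by (simp add: algebra_simps)
    also have "\<dots> = G * (2 - E)" unfolding a[symmetric] by (simp add: algebra_simps)
    finally show ?thesis .
  qed
  have "G * (1 - Fq q fps_X fps_X) = E * (G * (2 - E)) + G * (E * E) * X * (2 + c * X - 2 * Ep)"
    unfolding F by (simp add: algebra_simps)
  also have "\<dots> = E * (E * P) + G * (E * E) * X * (2 + c * X - 2 * Ep)" by (simp add: EP)
  also have "\<dots> = (1 + c * X) * (E * E)"
    unfolding cc by (simp add: algebra_simps)
  finally show ?thesis unfolding G_def c2 e2 X_def .
qed

lemma fps_eq_divide_if_times_eq:
  fixes A D C :: "'a::field fps"
  assumes "A * D = C" and "C $ 0 \<noteq> 0"
  shows "A = C / D"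
proof -
  have "D \<noteq> 0" using assms by auto
  then show ?thesis using assms(1) fps_divide_times_eq[of D A] by (simp add: mult.commute)
qed

theorem mainTheorem8:
  fixes q :: nat
  assumes "q \<ge> 2"
  shows "Abs_fps (\<lambda>n. of_nat (B n q) / fact n) =
    ((1 + (of_nat q - 2) * fps_X) * fps_exp 2) / (1 - Fq q fps_X fps_X)"
proof -
  have "Abs_fps (\<lambda>n. of_nat (B n q) / fact n) = egf (sls_count q)"
    using B_eq_card_SLS[OF assms] by (simp add: egf_def sls_count_def)
  moreover have "egf (sls_count q) * (1 - Fq q fps_X fps_X) = (1 + (of_nat q - 2) * fps_X) * fps_exp 2"
    using egf_SLS_times_denominator[OF assms] .
  moreover have "((1 + (of_nat q - 2) * fps_X) * fps_exp (2::real)) $ 0 \<noteq> 0" by simp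
  ultimately show ?thesis by (simp add: fps_eq_divide_if_times_eq)
qed

end
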